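(* Let $E$ be a Banach lattice. The following assertions are equivalent: (1) Each positive Dunford–Pettis operator $T:E\to E$ is uaw-Dunford–Pettis. (2) Each positive compact operator $T:E\to E$ is uaw-Dunford–Pettis. (3) The norm of the dual Banach lattice $E'$ is order continuous.
   Context: All operators are continuous linear operators. A net $(x_\alpha)$ in a Banach lattice $E$ is uaw-convergent to $x$ (written $x_\alpha\xrightarrow{uaw}x$) if $|x_\alpha-x|\wedge u\to 0$ weakly for every $u\in E_+$. An operator $T$ from a Banach lattice $E$ into a Banach space $X$ is uaw-Dunford–Pettis if for every norm bounded sequence $(x_n)$ in $E$ with $x_n\xrightarrow{uaw}0$ one has $\|Tx_n\|\to 0$. An operator between Banach spaces is Dunford–Pettis if it maps weakly null sequences to norm null sequences. *)

theory Defs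
  imports "HOL-Analysis.Analysis"
begin

class banach_lattice = banach + ordered_real_vector + lattice +
  assumes lattice_norm: "sup x (- x) \<le> sup y (- y) \<Longrightarrow> norm x \<le> norm y"

definition labs :: "'a::banach_lattice \<Rightarrow> 'a" where
  "labs x = sup x (- x)"

definition weakly_null :: "(nat \<Rightarrow> 'a::real_normed_vector) \<Rightarrow> bool" where
  "weakly_null x \<longleftrightarrow>
     (\<forall>f :: 'a \<Rightarrow> real. bounded_linear f \<longrightarrow> (\<lambda>n. f (x n)) \<longlonglongrightarrow> 0)"

definition uaw_convergent :: "(nat \<Rightarrow> 'a::banach_lattice) \<Rightarrow> 'a \<Rightarrow> bool" where
  "uaw_convergent x l \<longleftrightarrow>
     (\<forall>u. 0 \<le> u \<longrightarrow> weakly_null (\<lambda>n. inf (labs (x n - l)) u))"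

definition positive_op :: "('a::banach_lattice \<Rightarrow> 'b::banach_lattice) \<Rightarrow> bool" where
  "positive_op T \<longleftrightarrow> (\<forall>x. 0 \<le> x \<longrightarrow> 0 \<le> T x)"

definition compact_op :: "('a::real_normed_vector \<Rightarrow> 'b::real_normed_vector) \<Rightarrow> bool" where
  "compact_op T \<longleftrightarrow> bounded_linear T \<and> compact (closure (T ` ball 0 1))"

definition dunford_pettis_op :: "('a::real_normed_vector \<Rightarrow> 'b::real_normed_vector) \<Rightarrow> bool" where
  "dunford_pettis_op T \<longleftrightarrow> bounded_linear T \<and>
     (\<forall>x. weakly_null x \<longrightarrow> (\<lambda>n. norm (T (x n))) \<longlonglongrightarrow> 0)"

definition uaw_dunford_pettis_op :: "('a::banach_lattice \<Rightarrow> 'b::real_normed_vector) \<Rightarrow> bool" where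
  "uaw_dunford_pettis_op T \<longleftrightarrow> bounded_linear T \<and>
     (\<forall>x. bounded (range x) \<longrightarrow> uaw_convergent x 0 \<longrightarrow> (\<lambda>n. norm (T (x n))) \<longlonglongrightarrow> 0)"

definition dual_le :: "('a::banach_lattice \<Rightarrow>\<^sub>L real) \<Rightarrow> ('a \<Rightarrow>\<^sub>L real) \<Rightarrow> bool" where
  "dual_le f g \<longleftrightarrow> (\<forall>x. 0 \<le> x \<longrightarrow> blinfun_apply f x \<le> blinfun_apply g x)"

text \<open>Order continuity of the norm of E': for every net f_\<alpha> \<down> 0 in E',
  norm f_\<alpha> \<rightarrow> 0.  Nets decreasing to 0 are (up to reindexing) exactly the
  nonempty downward directed sets D with infimum 0; along such a set the norm
  is decreasing, so norm convergence to 0 means the norms get arbitrarily small.\<close>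
definition dual_order_continuous_norm :: "'a::banach_lattice itself \<Rightarrow> bool" where
  "dual_order_continuous_norm _ \<longleftrightarrow>
     (\<forall>D :: ('a \<Rightarrow>\<^sub>L real) set.
        D \<noteq> {}
        \<longrightarrow> (\<forall>f\<in>D. \<forall>g\<in>D. \<exists>h\<in>D. dual_le h f \<and> dual_le h g)
        \<longrightarrow> (\<forall>f\<in>D. dual_le 0 f)
        \<longrightarrow> (\<forall>h. (\<forall>f\<in>D. dual_le h f) \<longrightarrow> dual_le h 0)
        \<longrightarrow> (\<forall>\<epsilon>>0. \<exists>f\<in>D. norm f < \<epsilon>))"

end

theory Submission
  imports Defs "HOL-Library.Lattice_Algebras"
begin

text \<open>If the norm of \<open>E'\<close> is order continuous, every norm bounded uaw-null sequence is weakly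
  null, so positive Dunford--Pettis and positive compact operators are uaw-Dunford--Pettis.
  Writing a functional as a difference of positive ones, it suffices that \<open>f |x\<^sub>n| \<rightarrow> 0\<close> for
  positive \<open>f\<close>. Order continuity of the dual norm makes positive functionals vanish along bounded
  disjoint sequences: the components of \<open>f\<close> carried by the disjoint terms have tails decreasing
  to \<open>0\<close> in \<open>E'\<close>. If \<open>f |x\<^sub>n|\<close> stayed large, a subsequence whose terms have small truncations
  against the preceding ones could be disjointified, keeping \<open>f\<close> large on a disjoint sequence.

  If the norm of \<open>E'\<close> is not order continuous, a downward directed set of positive functionals
  with infimum \<open>0\<close> but norms bounded below yields, by the same disjointification, a positive \<open>f\<close>
  and a bounded disjoint positive sequence \<open>y\<^sub>n\<close> with \<open>f y\<^sub>n \<ge> \<delta> > 0\<close>. Disjoint sequences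
  are uaw-null, so the positive rank one operator \<open>x \<mapsto> f x \<cdot> y\<^sub>0\<close>, which is compact and
  Dunford--Pettis, is not uaw-Dunford--Pettis.\<close>

section \<open>Lattice arithmetic\<close>

subclass (in banach_lattice) lattice_ab_group_add ..

lemma labs_nonneg [simp]: "0 \<le> labs (x::'a::banach_lattice)"
proof -
  have "0 \<le> labs x + labs x"
    unfolding labs_def by (metis add.right_inverse add_mono sup.cobounded1 sup.cobounded2)
  then show ?thesis by simp
qed

lemma labs_eq_self: "0 \<le> (x::'a::banach_lattice) \<Longrightarrow> labs x = x"
  unfolding labs_def by (meson neg_le_0_iff_le order_trans sup.absorb1)

lemma norm_le_if_labs_le: "labs (x::'a::banach_lattice) \<le> labs y \<Longrightarrow> norm x \<le> norm y"
  unfolding labs_def by (rule lattice_norm)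

lemma norm_labs [simp]: "norm (labs (x::'a::banach_lattice)) = norm x"
  using norm_le_if_labs_le[of x "labs x"] norm_le_if_labs_le[of "labs x" x]
  by (simp add: labs_eq_self)

lemma norm_mono_nonneg: "0 \<le> (y::'a::banach_lattice) \<Longrightarrow> y \<le> x \<Longrightarrow> norm y \<le> norm x"
  by (rule norm_le_if_labs_le) (simp add: labs_eq_self order_trans[of 0 y x])

lemma norm_le_if_both_le:
  assumes "(x::'a::banach_lattice) \<le> c" "- x \<le> c" shows "norm x \<le> norm c"
proof -
  have "labs x \<le> c" using assms by (simp add: labs_def)
  then have "labs c = c" using labs_nonneg[of x] by (intro labs_eq_self) order
  then show ?thesis using \<open>labs x \<le> c\<close> by (intro norm_le_if_labs_le) simp
qed

lemma pprt_minus_pprt_uminus: "pprt (x::'a::lattice_ab_group_add) - pprt (- x) = x"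
  by (simp add: pprt_neg prts[symmetric])

lemma inf_pprt_pprt_uminus: "inf (pprt (x::'a::lattice_ab_group_add)) (pprt (- x)) = 0"
proof -
  have "pprt x = x + pprt (- x)" by (simp add: pprt_def add_sup_distrib_left sup_commute)
  then have "inf (pprt x) (pprt (- x)) = inf (x + pprt (- x)) (0 + pprt (- x))" by simp
  also have "\<dots> = inf x 0 + pprt (- x)" by (simp add: add_inf_distrib_right)
  also have "inf x 0 = - pprt (- x)" by (simp add: pprt_neg nprt_def)
  finally show ?thesis by simp
qed

lemma pprt_le_labs: "pprt (x::'a::banach_lattice) \<le> labs x"
  unfolding pprt_def using labs_nonneg[of x] by (simp add: labs_def le_supI1)

lemma norm_pprt_le: "norm (pprt (x::'a::banach_lattice)) \<le> norm x"
  using norm_mono_nonneg[OF zero_le_pprt pprt_le_labs, of x] by simp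

lemma pprt_diff_eq: "pprt ((a::'a::lattice_ab_group_add) - b) = a - inf a b"
proof -
  have "pprt (a - b) = sup (a + - b) (a + - a)" by (simp add: pprt_def)
  also have "\<dots> = a + sup (- b) (- a)" by (simp add: add_sup_distrib_left)
  finally show ?thesis by (simp add: diff_inf_eq_sup sup_commute)
qed

lemma pprt_diff_pprt_le: "pprt (a::'a::banach_lattice) - pprt b \<le> labs (a - b)"
proof -
  have "a \<le> pprt b + pprt (a - b)"
    by (metis add_mono diff_add_cancel add.commute pprt_def sup.cobounded1)
  then have "pprt a \<le> pprt b + pprt (a - b)" by (simp add: pprt_def)
  then show ?thesis using pprt_le_labs[of "a - b"] by (simp add: algebra_simps add_left_mono order_trans)
qed

lemma norm_pprt_diff_le: "norm (pprt (a::'a::banach_lattice) - pprt b) \<le> norm (a - b)"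
proof -
  have "labs (b - a) = labs (a - b)" by (simp add: labs_def sup_commute)
  then have "norm (pprt a - pprt b) \<le> norm (labs (a - b))"
    using pprt_diff_pprt_le[of a b] pprt_diff_pprt_le[of b a] by (intro norm_le_if_both_le) simp_all
  then show ?thesis by simp
qed

lemma closed_nonneg_cone: "closed {x::'a::banach_lattice. 0 \<le> x}"
proof -
  have "1-lipschitz_on UNIV (\<lambda>x::'a. pprt (- x))"
    using norm_pprt_diff_le[of "- _" "- _"] by (intro lipschitz_onI) (simp_all add: dist_norm norm_minus_commute)
  then have "closed {x::'a. pprt (- x) = 0}"
    by (intro closed_Collect_eq continuous_on_const lipschitz_on_continuous_on)
  moreover have "{x::'a. pprt (- x) = 0} = {x. 0 \<le> x}"
    by (auto simp: pprt_def simp flip: le_iff_sup)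
  ultimately show ?thesis by simp
qed

lemma scaleR_inf_distrib:
  assumes c: "0 \<le> c" shows "c *\<^sub>R inf (x::'a::banach_lattice) y = inf (c *\<^sub>R x) (c *\<^sub>R y)"
proof (cases "c = 0")
  case False
  then have cp: "0 < c" using c by simp
  show ?thesis
  proof (rule antisym)
    show "c *\<^sub>R inf x y \<le> inf (c *\<^sub>R x) (c *\<^sub>R y)"
      using c by (simp add: scaleR_left_mono)
    have "inverse c *\<^sub>R inf (c *\<^sub>R x) (c *\<^sub>R y) \<le> inf x y"
      using cp scaleR_left_mono[of "inf (c *\<^sub>R x) (c *\<^sub>R y)" "c *\<^sub>R x" "inverse c"]
        scaleR_left_mono[of "inf (c *\<^sub>R x) (c *\<^sub>R y)" "c *\<^sub>R y" "inverse c"] by simp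
    then have "c *\<^sub>R (inverse c *\<^sub>R inf (c *\<^sub>R x) (c *\<^sub>R y)) \<le> c *\<^sub>R inf x y"
      by (rule scaleR_left_mono[OF _ c])
    then show "inf (c *\<^sub>R x) (c *\<^sub>R y) \<le> c *\<^sub>R inf x y" using cp by simp
  qed
qed simp

lemma scaleR_sup_distrib: "0 \<le> c \<Longrightarrow> c *\<^sub>R sup (x::'a::banach_lattice) y = sup (c *\<^sub>R x) (c *\<^sub>R y)"
  using scaleR_inf_distrib[of c "- x" "- y"] sup_eq_neg_inf[of x y] sup_eq_neg_inf[of "c *\<^sub>R x" "c *\<^sub>R y"]
  by (metis scaleR_minus_right)

lemma scaleR_pprt: "0 \<le> c \<Longrightarrow> c *\<^sub>R pprt (x::'a::banach_lattice) = pprt (c *\<^sub>R x)"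
  by (simp add: pprt_def scaleR_sup_distrib)

lemma inf_add_nonneg_le: "0 \<le> (c::'a::lattice_ab_group_add) \<Longrightarrow> inf a (b + c) \<le> inf a b + c"
proof -
  assume c: "0 \<le> c"
  have "inf a (b + c) \<le> inf (a + c) (b + c)"
    using c by (meson add_increasing2 inf_mono order_refl)
  then show ?thesis by (simp add: add_inf_distrib_right)
qed

lemma inf_add_le_add_inf:
  fixes x y w :: "'a::lattice_ab_group_add"
  assumes "0 \<le> x" "0 \<le> y" "0 \<le> w"
  shows "inf (x + y) w \<le> inf x w + inf y w"
proof -
  have shift: "inf (p + q) w \<le> inf p w + q" if "0 \<le> q" for p q :: 'a
  proof -
    have "inf (p + q) w = q + inf p (w - q)"
      using add_inf_distrib_left[of q p "w - q"] by (simp add: add.commute)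
    also have "inf p (w - q) \<le> inf p w" using that by (simp add: le_infI1 inf.coboundedI2)
    finally show ?thesis by (simp add: add.commute)
  qed
  have "inf (x + y) w \<le> inf (inf x w + y) w" using shift[OF \<open>0 \<le> y\<close>, of x] by simp
  also have "\<dots> \<le> inf y w + inf x w"
    using shift[of "inf x w" y] assms by (simp add: add.commute)
  finally show ?thesis by (simp add: add.commute)
qed

lemma add_eq_sup_if_inf_eq_0: "inf (a::'a::lattice_ab_group_add) b = 0 \<Longrightarrow> a + b = sup a b"
  using add_eq_inf_sup[of a b] by simp

lemma member_le_sum_nonneg:
  fixes f :: "'b \<Rightarrow> 'a::ordered_comm_monoid_add"
  assumes "finite A" "i \<in> A" "\<And>j. j \<in> A \<Longrightarrow> 0 \<le> f j"
  shows "f i \<le> sum f A"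
proof -
  have "0 \<le> sum f (A - {i})" using assms(3) by (intro sum_nonneg) auto
  then show ?thesis using assms(1,2) by (simp add: sum.remove add_increasing2)
qed

lemma inf_sum_le_sum_inf:
  fixes z :: "'b \<Rightarrow> 'a::lattice_ab_group_add"
  assumes "finite F" "\<And>j. j \<in> F \<Longrightarrow> 0 \<le> z j" "0 \<le> w"
  shows "inf (sum z F) w \<le> (\<Sum>j\<in>F. inf (z j) w)"
  using assms
proof (induction F rule: finite_induct)
  case (insert i F)
  have "inf (sum z (insert i F)) w \<le> inf (z i) w + inf (sum z F) w"
    using insert by (simp add: inf_add_le_add_inf sum_nonneg)
  also have "\<dots> \<le> inf (z i) w + (\<Sum>j\<in>F. inf (z j) w)"
    using insert by (simp add: add_left_mono)
  finally show ?case using insert by simp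
qed simp

lemma sum_disjoint_le:
  fixes z :: "'b \<Rightarrow> 'a::lattice_ab_group_add"
  assumes "finite F" "\<And>i. i \<in> F \<Longrightarrow> 0 \<le> z i" "\<And>i. i \<in> F \<Longrightarrow> z i \<le> u"
    "\<And>i j. i \<in> F \<Longrightarrow> j \<in> F \<Longrightarrow> i \<noteq> j \<Longrightarrow> inf (z i) (z j) = 0" "0 \<le> u"
  shows "sum z F \<le> u"
  using assms
proof (induction F rule: finite_induct)
  case empty
  then show ?case by simp
next
  case (insert i F)
  have "inf (sum z F) (z i) \<le> (\<Sum>j\<in>F. inf (z j) (z i))"
    using insert by (intro inf_sum_le_sum_inf) auto
  also have "\<dots> = 0" using insert by (intro sum.neutral) auto
  finally have "inf (sum z F) (z i) = 0"
    using insert by (simp add: antisym sum_nonneg)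
  then have "sum z (insert i F) = sup (sum z F) (z i)"
    using insert add_eq_sup_if_inf_eq_0[of "sum z F" "z i"] by (simp add: add.commute)
  then show ?case using insert by simp
qed

section \<open>Positive functionals\<close>

lemma cone_homogeneous_if_le:
  fixes p :: "'a::ordered_real_vector \<Rightarrow> real"
  assumes le: "\<And>c x. 0 < c \<Longrightarrow> 0 \<le> x \<Longrightarrow> p (c *\<^sub>R x) \<le> c * p x"
    and p0: "p 0 = 0" and c: "0 \<le> c" and x: "0 \<le> x"
  shows "p (c *\<^sub>R x) = c * p x"
proof (cases "c = 0")
  case False
  then have cp: "0 < c" using c by simp
  have "p x = p (inverse c *\<^sub>R (c *\<^sub>R x))" using cp by simp
  also have "\<dots> \<le> inverse c * p (c *\<^sub>R x)"
    using cp x by (intro le) (simp_all add: scaleR_nonneg_nonneg)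
  finally have "c * p x \<le> p (c *\<^sub>R x)" using cp by (simp add: field_simps)
  then show ?thesis using le[OF cp x] by simp
qed (simp add: p0)

lemma cone_additive_diff_eq:
  fixes h :: "'a::ordered_ab_group_add \<Rightarrow> 'b::ab_group_add"
  assumes add: "\<And>x y. 0 \<le> x \<Longrightarrow> 0 \<le> y \<Longrightarrow> h (x + y) = h x + h y"
    and "0 \<le> a" "0 \<le> b" "0 \<le> c" "0 \<le> d" "a - b = c - d"
  shows "h a - h b = h c - h d"
proof -
  have "a + d = c + b" using \<open>a - b = c - d\<close> by (simp add: algebra_simps)
  then have "h a + h d = h c + h b" using add assms(2-5) by metis
  then show ?thesis by (simp add: algebra_simps)
qed

lemma dual_le_0_iff: "dual_le 0 g \<longleftrightarrow> (\<forall>x. 0 \<le> x \<longrightarrow> 0 \<le> g x)"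
  by (simp add: dual_le_def)

lemma dual_le_trans: "dual_le f g \<Longrightarrow> dual_le g h \<Longrightarrow> dual_le f h"
  unfolding dual_le_def by (meson order_trans)

lemma positive_functional_mono: "dual_le 0 g \<Longrightarrow> x \<le> y \<Longrightarrow> g x \<le> g y"
  unfolding dual_le_0_iff by (metis blinfun.diff_right diff_ge_0_iff_ge)

lemma positive_functional_abs_le: "dual_le 0 g \<Longrightarrow> \<bar>g x\<bar> \<le> g (labs x)"
  using positive_functional_mono[of g x "labs x"] positive_functional_mono[of g "- x" "labs x"]
  by (simp add: labs_def blinfun.minus_right)

lemma blinfun_le_norm: "blinfun_apply g x \<le> norm g * norm x"
  using norm_blinfun[of g x] by simp

definition cone_extension :: "('a::banach_lattice \<Rightarrow> real) \<Rightarrow> 'a \<Rightarrow> real" where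
  "cone_extension h x = h (pprt x) - h (pprt (- x))"

context
  fixes h :: "'a::banach_lattice \<Rightarrow> real"
  assumes add: "\<And>x y. 0 \<le> x \<Longrightarrow> 0 \<le> y \<Longrightarrow> h (x + y) = h x + h y"
    and hom: "\<And>c x. 0 \<le> c \<Longrightarrow> 0 \<le> x \<Longrightarrow> h (c *\<^sub>R x) = c * h x"
begin

lemma cone_extension_diff: "0 \<le> a \<Longrightarrow> 0 \<le> b \<Longrightarrow> cone_extension h (a - b) = h a - h b"
  unfolding cone_extension_def using pprt_minus_pprt_uminus[of "a - b"]
  by (intro cone_additive_diff_eq[OF add]) simp_all

lemma cone_extension_eq: "0 \<le> x \<Longrightarrow> cone_extension h x = h x"
  using cone_extension_diff[of x 0] hom[of 0 0] by simp

lemma linear_cone_extension: "linear (cone_extension h)"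
proof (rule linearI)
  fix x y :: 'a
  have "x + y = (pprt x + pprt y) - (pprt (- x) + pprt (- y))"
    by (metis add_diff_add pprt_minus_pprt_uminus)
  then show "cone_extension h (x + y) = cone_extension h x + cone_extension h y"
    using cone_extension_diff[of "pprt x + pprt y" "pprt (- x) + pprt (- y)"]
    by (simp add: add cone_extension_def)
next
  fix c :: real and x :: 'a
  show "cone_extension h (c *\<^sub>R x) = c *\<^sub>R cone_extension h x"
  proof (cases "0 \<le> c")
    case True
    have eq: "c *\<^sub>R x = c *\<^sub>R pprt x - c *\<^sub>R pprt (- x)"
      by (metis pprt_minus_pprt_uminus scaleR_diff_right)
    have "cone_extension h (c *\<^sub>R x) = h (c *\<^sub>R pprt x) - h (c *\<^sub>R pprt (- x))"
      unfolding eq using True by (intro cone_extension_diff) (simp_all add: scaleR_nonneg_nonneg)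
    then show ?thesis using True by (simp add: hom cone_extension_def algebra_simps)
  next
    case False
    have eq: "c *\<^sub>R x = (- c) *\<^sub>R pprt (- x) - (- c) *\<^sub>R pprt x"
      by (metis pprt_minus_pprt_uminus scaleR_diff_right minus_diff_eq scaleR_minus_left)
    have "cone_extension h (c *\<^sub>R x) = h ((- c) *\<^sub>R pprt (- x)) - h ((- c) *\<^sub>R pprt x)"
      unfolding eq using False by (intro cone_extension_diff) (simp_all add: scaleR_nonpos_nonneg)
    then show ?thesis
      using False hom[of "- c" "pprt (- x)"] hom[of "- c" "pprt x"]
      by (simp add: cone_extension_def algebra_simps)
  qed
qed

lemma positive_functional_extension:
  assumes bnd: "\<And>x. 0 \<le> x \<Longrightarrow> h x \<le> C * norm x"
    and nonneg: "\<And>x. 0 \<le> x \<Longrightarrow> 0 \<le> h x"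
  obtains F :: "'a \<Rightarrow>\<^sub>L real" where "dual_le 0 F" "\<And>x. 0 \<le> x \<Longrightarrow> F x = h x"
proof -
  have "norm (cone_extension h x) \<le> norm x * (2 * \<bar>C\<bar>)" for x
  proof -
    have "h (pprt y) \<le> \<bar>C\<bar> * norm x" if "norm (pprt y) \<le> norm x" for y
      using bnd[of "pprt y"] that
      by (smt (verit, best) abs_ge_self mult_mono norm_ge_zero zero_le_pprt)
    from this[OF norm_pprt_le] this[OF norm_pprt_le[of "- x", simplified]]
    have "\<bar>cone_extension h x\<bar> \<le> 2 * (\<bar>C\<bar> * norm x)"
      using nonneg[OF zero_le_pprt, of x] nonneg[OF zero_le_pprt, of "- x"]
      unfolding cone_extension_def by linarith
    then show ?thesis by (simp add: algebra_simps)
  qed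
  then have "bounded_linear (cone_extension h)"
    using linear_cone_extension by (intro bounded_linear_intro) (simp_all add: linear_add linear_scale)
  then have "blinfun_apply (Blinfun (cone_extension h)) = cone_extension h"
    by (rule bounded_linear_Blinfun_apply)
  then show ?thesis
    using nonneg cone_extension_eq by (intro that[of "Blinfun (cone_extension h)"]) (simp_all add: dual_le_0_iff)
qed

end

text \<open>On the positive cone, the positive part of \<open>\<phi>\<close> in \<open>E'\<close> (Riesz--Kantorovich formula).\<close>

definition functional_pprt :: "('a::banach_lattice \<Rightarrow> real) \<Rightarrow> 'a \<Rightarrow> real" where
  "functional_pprt \<phi> x = (SUP y\<in>{0..x}. \<phi> y)"

context
  fixes \<phi> :: "'a::banach_lattice \<Rightarrow> real"
  assumes \<phi>: "bounded_linear \<phi>"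
begin

interpretation \<phi>: bounded_linear \<phi> by (rule \<phi>)

lemma le_onorm_on_order_interval: "y \<in> {0..x} \<Longrightarrow> \<phi> y \<le> onorm \<phi> * norm x"
proof -
  assume "y \<in> {0..x}"
  then have "norm y \<le> norm x" by (auto intro: norm_mono_nonneg)
  then have "onorm \<phi> * norm y \<le> onorm \<phi> * norm x" by (simp add: mult_left_mono onorm_pos_le[OF \<phi>])
  then show ?thesis using onorm[OF \<phi>, of y] by simp
qed

lemma functional_pprt_upper: "y \<in> {0..x} \<Longrightarrow> \<phi> y \<le> functional_pprt \<phi> x"
  unfolding functional_pprt_def
  by (rule cSUP_upper) (auto intro!: bdd_aboveI2 le_onorm_on_order_interval)

lemma functional_pprt_least: "0 \<le> x \<Longrightarrow> (\<And>y. y \<in> {0..x} \<Longrightarrow> \<phi> y \<le> m) \<Longrightarrow> functional_pprt \<phi> x \<le> m"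
  unfolding functional_pprt_def by (rule cSUP_least) auto

lemma functional_pprt_add:
  assumes a: "0 \<le> a" and b: "0 \<le> b"
  shows "functional_pprt \<phi> (a + b) = functional_pprt \<phi> a + functional_pprt \<phi> b"
proof (rule antisym)
  show "functional_pprt \<phi> (a + b) \<le> functional_pprt \<phi> a + functional_pprt \<phi> b"
  proof (rule functional_pprt_least)
    show "0 \<le> a + b" using a b by simp
    fix y assume y: "y \<in> {0..a + b}"
    have "inf y a \<in> {0..a}" using y a by auto
    moreover have "pprt (y - a) \<in> {0..b}"
      using y b by (simp add: pprt_def algebra_simps)
    moreover have "y = inf y a + pprt (y - a)" by (metis pprt_diff_eq add.commute diff_add_cancel)
    ultimately show "\<phi> y \<le> functional_pprt \<phi> a + functional_pprt \<phi> b"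
      using functional_pprt_upper by (metis add_mono \<phi>.add)
  qed
  have "functional_pprt \<phi> a \<le> functional_pprt \<phi> (a + b) - functional_pprt \<phi> b"
  proof (rule functional_pprt_least[OF a])
    fix y1 assume y1: "y1 \<in> {0..a}"
    have "functional_pprt \<phi> b \<le> functional_pprt \<phi> (a + b) - \<phi> y1"
    proof (rule functional_pprt_least[OF b])
      fix y2 assume "y2 \<in> {0..b}"
      then have "y1 + y2 \<in> {0..a + b}" using y1 by (auto intro: add_mono)
      then show "\<phi> y2 \<le> functional_pprt \<phi> (a + b) - \<phi> y1"
        using functional_pprt_upper[of "y1 + y2" "a + b"] by (simp add: \<phi>.add)
    qed
    then show "\<phi> y1 \<le> functional_pprt \<phi> (a + b) - functional_pprt \<phi> b" by simp
  qed
  then show "functional_pprt \<phi> a + functional_pprt \<phi> b \<le> functional_pprt \<phi> (a + b)" by simp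
qed

lemma functional_pprt_scaleR:
  assumes "0 \<le> c" "0 \<le> x"
  shows "functional_pprt \<phi> (c *\<^sub>R x) = c * functional_pprt \<phi> x"
proof (rule cone_homogeneous_if_le[OF _ _ assms])
  show "functional_pprt \<phi> 0 = 0"
    by (simp add: functional_pprt_def \<phi>.zero)
  fix c :: real and x :: 'a assume c: "0 < c" and x: "0 \<le> x"
  show "functional_pprt \<phi> (c *\<^sub>R x) \<le> c * functional_pprt \<phi> x"
  proof (rule functional_pprt_least)
    show "0 \<le> c *\<^sub>R x" using c x by (simp add: scaleR_nonneg_nonneg)
    fix y assume "y \<in> {0..c *\<^sub>R x}"
    then have "inverse c *\<^sub>R y \<in> {0..x}"
      using c scaleR_left_mono[of y "c *\<^sub>R x" "inverse c"] by (simp add: scaleR_nonneg_nonneg)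
    then have "\<phi> (inverse c *\<^sub>R y) \<le> functional_pprt \<phi> x" by (rule functional_pprt_upper)
    then show "\<phi> y \<le> c * functional_pprt \<phi> x"
      using c by (simp add: \<phi>.scaleR field_simps)
  qed
qed

lemma bounded_linear_eq_diff_positive_functionals:
  obtains P Q :: "'a \<Rightarrow>\<^sub>L real" where "dual_le 0 P" "dual_le 0 Q" "\<And>x. \<phi> x = P x - Q x"
proof -
  have nonneg: "0 \<le> functional_pprt \<phi> x" if "0 \<le> x" for x
    using functional_pprt_upper[of 0 x] that by (simp add: \<phi>.zero)
  have bound: "functional_pprt \<phi> x \<le> onorm \<phi> * norm x" if "0 \<le> x" for x
    using that by (intro functional_pprt_least le_onorm_on_order_interval)
  obtain P where P: "dual_le 0 P" and P_eq: "\<And>x. 0 \<le> x \<Longrightarrow> P x = functional_pprt \<phi> x"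
    using positive_functional_extension[OF functional_pprt_add functional_pprt_scaleR bound nonneg]
    by blast
  have Q: "blinfun_apply (P - Blinfun \<phi>) x = P x - \<phi> x" for x
    using \<phi> by (simp add: bounded_linear_Blinfun_apply blinfun.diff_left)
  have "dual_le 0 (P - Blinfun \<phi>)"
    unfolding dual_le_0_iff Q using P_eq functional_pprt_upper by fastforce
  then show ?thesis using P Q by (intro that[of P "P - Blinfun \<phi>"]) simp_all
qed

end

definition directed_Inf :: "('a::banach_lattice \<Rightarrow>\<^sub>L real) set \<Rightarrow> 'a \<Rightarrow> real" where
  "directed_Inf D x = (INF g\<in>D. blinfun_apply g x)"

context
  fixes D :: "('a::banach_lattice \<Rightarrow>\<^sub>L real) set"
  assumes ne: "D \<noteq> {}"
    and directed: "\<forall>f\<in>D. \<forall>g\<in>D. \<exists>h\<in>D. dual_le h f \<and> dual_le h g"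
    and positive: "\<forall>f\<in>D. dual_le 0 f"
begin

lemma directed_Inf_lower: "g \<in> D \<Longrightarrow> 0 \<le> x \<Longrightarrow> directed_Inf D x \<le> g x"
  unfolding directed_Inf_def using positive
  by (intro cINF_lower bdd_belowI2[where m=0]) (auto simp: dual_le_0_iff)

lemma directed_Inf_greatest: "(\<And>g. g \<in> D \<Longrightarrow> m \<le> g x) \<Longrightarrow> m \<le> directed_Inf D x"
  unfolding directed_Inf_def using ne by (rule cINF_greatest)

lemma directed_Inf_less: "0 \<le> x \<Longrightarrow> directed_Inf D x < a \<Longrightarrow> \<exists>g\<in>D. g x < a"
  by (meson directed_Inf_greatest not_le)

lemma directed_Inf_add:
  assumes a: "0 \<le> a" and b: "0 \<le> b"
  shows "directed_Inf D (a + b) = directed_Inf D a + directed_Inf D b"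
proof (rule antisym)
  show "directed_Inf D (a + b) \<le> directed_Inf D a + directed_Inf D b"
  proof (rule field_le_epsilon)
    fix e :: real assume e: "0 < e"
    obtain g1 where g1: "g1 \<in> D" "g1 a < directed_Inf D a + e/2"
      using directed_Inf_less[OF a, of "directed_Inf D a + e/2"] e by auto
    obtain g2 where g2: "g2 \<in> D" "g2 b < directed_Inf D b + e/2"
      using directed_Inf_less[OF b, of "directed_Inf D b + e/2"] e by auto
    obtain g where g: "g \<in> D" "dual_le g g1" "dual_le g g2" using directed g1 g2 by blast
    have "directed_Inf D (a + b) \<le> g a + g b"
      using directed_Inf_lower[OF g(1), of "a + b"] a b by (simp add: blinfun.add_right)
    also have "\<dots> \<le> g1 a + g2 b" using g a b by (simp add: dual_le_def add_mono)
    finally show "directed_Inf D (a + b) \<le> directed_Inf D a + directed_Inf D b + e"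
      using g1 g2 by simp
  qed
  show "directed_Inf D a + directed_Inf D b \<le> directed_Inf D (a + b)"
    using directed_Inf_lower a b
    by (intro directed_Inf_greatest) (simp add: blinfun.add_right add_mono)
qed

lemma directed_Inf_scaleR:
  assumes "0 \<le> c" "0 \<le> x"
  shows "directed_Inf D (c *\<^sub>R x) = c * directed_Inf D x"
proof (rule cone_homogeneous_if_le[OF _ _ assms])
  show "directed_Inf D 0 = 0" using ne by (simp add: directed_Inf_def)
  fix c :: real and x :: 'a assume c: "0 < c" and x: "0 \<le> x"
  have "directed_Inf D (c *\<^sub>R x) / c \<le> directed_Inf D x"
  proof (rule directed_Inf_greatest)
    fix g assume "g \<in> D"
    then have "directed_Inf D (c *\<^sub>R x) \<le> c * g x"
      using directed_Inf_lower[of g "c *\<^sub>R x"] c x by (simp add: scaleR_nonneg_nonneg blinfun.scaleR_right)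
    then show "directed_Inf D (c *\<^sub>R x) / c \<le> g x" using c by (simp add: field_simps)
  qed
  then show "directed_Inf D (c *\<^sub>R x) \<le> c * directed_Inf D x" using c by (simp add: field_simps)
qed

lemma directed_Inf_functional:
  obtains H where "dual_le 0 H" "\<And>x. 0 \<le> x \<Longrightarrow> H x = directed_Inf D x"
proof -
  obtain g0 where g0: "g0 \<in> D" using ne by blast
  have "0 \<le> directed_Inf D x" if "0 \<le> x" for x
    using positive that by (intro directed_Inf_greatest) (simp add: dual_le_0_iff)
  moreover have "directed_Inf D x \<le> norm g0 * norm x" if "0 \<le> x" for x
    using directed_Inf_lower[OF g0 that] blinfun_le_norm[of g0 x] by simp
  ultimately show ?thesis
    using positive_functional_extension[OF directed_Inf_add directed_Inf_scaleR] that by blast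
qed

lemma directed_to_zero_pointwise:
  assumes Inf0: "\<forall>h. (\<forall>f\<in>D. dual_le h f) \<longrightarrow> dual_le h 0"
    and z: "0 \<le> z" and e: "0 < \<epsilon>" and g: "g \<in> D"
  shows "\<exists>g'\<in>D. dual_le g' g \<and> g' z < \<epsilon>"
proof -
  obtain H where H: "dual_le 0 H" and H_eq: "\<And>x. 0 \<le> x \<Longrightarrow> H x = directed_Inf D x"
    using directed_Inf_functional by blast
  have "\<forall>f\<in>D. dual_le H f" using H_eq directed_Inf_lower by (simp add: dual_le_def)
  then have "directed_Inf D z \<le> 0" using Inf0 H_eq[OF z] z by (fastforce simp: dual_le_def)
  then have "directed_Inf D z < \<epsilon>" using e by simp
  then obtain g1 where g1: "g1 \<in> D" "g1 z < \<epsilon>" using directed_Inf_less[OF z] by blast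
  obtain g' where g': "g' \<in> D" "dual_le g' g" "dual_le g' g1" using directed g g1 by blast
  then have "g' z \<le> g1 z" using z by (simp add: dual_le_def)
  then show ?thesis using g' g1 by force
qed

end

section \<open>Disjoint sequences and components\<close>

lemma disjoint_dominated_weakly_null:
  fixes z :: "nat \<Rightarrow> 'a::banach_lattice"
  assumes pos: "\<And>n. 0 \<le> z n" and le: "\<And>n. z n \<le> u"
    and disj: "\<And>n m. n \<noteq> m \<Longrightarrow> inf (z n) (z m) = 0"
  shows "weakly_null z"
  unfolding weakly_null_def
proof (intro allI impI)
  fix f :: "'a \<Rightarrow> real"
  assume f: "bounded_linear f"
  interpret f: bounded_linear f by (rule f)
  have "0 \<le> u" using pos le order_trans by blast
  have sum_bound: "\<bar>f (sum z P)\<bar> \<le> onorm f * norm u" if "finite P" for P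
  proof -
    have "\<bar>f (sum z P)\<bar> \<le> onorm f * norm (sum z P)" using onorm[OF f] by simp
    also have "norm (sum z P) \<le> norm u"
      using that pos le disj \<open>0 \<le> u\<close> by (intro norm_mono_nonneg sum_nonneg sum_disjoint_le) auto
    finally show ?thesis by (simp add: mult_left_mono onorm_pos_le[OF f])
  qed
  have "(\<Sum>i<N. \<bar>f (z i)\<bar>) \<le> 2 * (onorm f * norm u)" for N
  proof -
    define P where "P = {n \<in> {..<N}. 0 \<le> f (z n)}"
    define Q where "Q = {n \<in> {..<N}. f (z n) < 0}"
    have PQ: "{..<N} = P \<union> Q" "P \<inter> Q = {}" "finite P" "finite Q"
      by (auto simp: P_def Q_def)
    have "(\<Sum>i<N. \<bar>f (z i)\<bar>) = (\<Sum>i\<in>P. \<bar>f (z i)\<bar>) + (\<Sum>i\<in>Q. \<bar>f (z i)\<bar>)"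
      unfolding PQ(1) by (rule sum.union_disjoint[OF PQ(3,4,2)])
    moreover have "(\<Sum>i\<in>P. \<bar>f (z i)\<bar>) = f (sum z P)"
      unfolding f.sum by (rule sum.cong) (auto simp: P_def)
    moreover have "(\<Sum>i\<in>Q. \<bar>f (z i)\<bar>) = - f (sum z Q)"
      unfolding f.sum sum_negf[symmetric] by (rule sum.cong) (auto simp: Q_def)
    ultimately show ?thesis using sum_bound[OF PQ(3)] sum_bound[OF PQ(4)] by linarith
  qed
  then have "summable (\<lambda>n. \<bar>f (z n)\<bar>)" by (intro summableI_nonneg_bounded) auto
  then show "(\<lambda>n. f (z n)) \<longlonglongrightarrow> 0"
    using summable_LIMSEQ_zero tendsto_rabs_zero_iff by blast
qed

lemma disjoint_uaw_null:
  fixes y :: "nat \<Rightarrow> 'a::banach_lattice"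
  assumes pos: "\<And>n. 0 \<le> y n" and disj: "\<And>n m. n \<noteq> m \<Longrightarrow> inf (y n) (y m) = 0"
  shows "uaw_convergent y 0"
  unfolding uaw_convergent_def
proof (intro allI impI)
  fix u :: 'a assume u: "0 \<le> u"
  have "inf (inf (y n) u) (inf (y m) u) = 0" if "n \<noteq> m" for n m
    using disj[OF that] pos[of n] pos[of m] u inf_mono[of "inf (y n) u" "y n" "inf (y m) u" "y m"]
    by (simp add: antisym)
  then show "weakly_null (\<lambda>n. inf (labs (y n - 0)) u)"
    using pos u by (simp add: labs_eq_self disjoint_dominated_weakly_null[where u=u])
qed

text \<open>On the positive cone, the component of \<open>f\<close> in the band generated by \<open>v\<close>.\<close>

definition component :: "('a::banach_lattice \<Rightarrow>\<^sub>L real) \<Rightarrow> 'a \<Rightarrow> 'a \<Rightarrow> real" where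
  "component f v x = (SUP k::nat. f (inf x (real k *\<^sub>R v)))"

context
  fixes f :: "'a::banach_lattice \<Rightarrow>\<^sub>L real"
  assumes f: "dual_le 0 f"
begin

context
  fixes v :: 'a
  assumes v: "0 \<le> v"
begin

lemma component_approx_mono: "0 \<le> s \<Longrightarrow> s \<le> t \<Longrightarrow> f (inf x (s *\<^sub>R v)) \<le> f (inf x (t *\<^sub>R v))"
  using f v by (intro positive_functional_mono inf_mono scaleR_right_mono) simp_all

lemma component_approx_le: "f (inf x (t *\<^sub>R v)) \<le> f x"
  using f by (intro positive_functional_mono) simp_all

lemma component_upper: "0 \<le> t \<Longrightarrow> f (inf x (t *\<^sub>R v)) \<le> component f v x"
proof -
  assume t: "0 \<le> t"
  have "f (inf x (t *\<^sub>R v)) \<le> f (inf x (real (nat \<lceil>t\<rceil>) *\<^sub>R v))"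
    using t by (intro component_approx_mono) linarith+
  also have "\<dots> \<le> component f v x"
    unfolding component_def using component_approx_le by (intro cSUP_upper bdd_aboveI2) auto
  finally show ?thesis .
qed

lemma component_least: "(\<And>k::nat. f (inf x (real k *\<^sub>R v)) \<le> m) \<Longrightarrow> component f v x \<le> m"
  unfolding component_def by (rule cSUP_least) auto

lemma component_LIMSEQ: "(\<lambda>k. f (inf x (real k *\<^sub>R v))) \<longlonglongrightarrow> component f v x"
  unfolding component_def using component_approx_le
  by (intro LIMSEQ_incseq_SUP bdd_aboveI2 incseq_SucI component_approx_mono) auto

lemma component_le: "component f v x \<le> f x"
  by (rule component_least) (rule component_approx_le)

lemma component_self: "component f v v = f v"
  using component_upper[of 1 v] by (intro antisym component_le) simp

lemma component_add:
  assumes a: "0 \<le> a" and b: "0 \<le> b"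
  shows "component f v (a + b) = component f v a + component f v b"
proof (rule antisym)
  show "component f v (a + b) \<le> component f v a + component f v b"
  proof (rule component_least)
    fix k :: nat
    have "f (inf (a + b) (real k *\<^sub>R v)) \<le> f (inf a (real k *\<^sub>R v) + inf b (real k *\<^sub>R v))"
      using a b v by (intro positive_functional_mono[OF f] inf_add_le_add_inf) (simp_all add: scaleR_nonneg_nonneg)
    also have "\<dots> \<le> component f v a + component f v b"
      using component_upper[of "real k" a] component_upper[of "real k" b] by (simp add: blinfun.add_right)
    finally show "f (inf (a + b) (real k *\<^sub>R v)) \<le> component f v a + component f v b" .
  qed
  have "f (inf a (real k *\<^sub>R v)) + f (inf b (real k *\<^sub>R v)) \<le> component f v (a + b)" for k
  proof -
    have "(2 * real k) *\<^sub>R v = real k *\<^sub>R v + real k *\<^sub>R v" by (simp add: scaleR_add_left[symmetric])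
    then have "inf a (real k *\<^sub>R v) + inf b (real k *\<^sub>R v) \<le> inf (a + b) ((2 * real k) *\<^sub>R v)"
      by (auto intro!: le_infI add_mono)
    then have "f (inf a (real k *\<^sub>R v) + inf b (real k *\<^sub>R v)) \<le> component f v (a + b)"
      using component_upper[of "2 * real k" "a + b"] positive_functional_mono[OF f] by fastforce
    then show ?thesis by (simp add: blinfun.add_right)
  qed
  then show "component f v a + component f v b \<le> component f v (a + b)"
    by (intro LIMSEQ_le_const2[OF tendsto_add[OF component_LIMSEQ component_LIMSEQ]]) auto
qed

lemma component_scaleR:
  assumes "0 \<le> c" "0 \<le> x"
  shows "component f v (c *\<^sub>R x) = c * component f v x"
proof (rule cone_homogeneous_if_le[OF _ _ assms])
  show "component f v 0 = 0"
    using v by (simp add: component_def inf_absorb1 scaleR_nonneg_nonneg)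
  fix c :: real and x :: 'a assume c: "0 < c" and x: "0 \<le> x"
  show "component f v (c *\<^sub>R x) \<le> c * component f v x"
  proof (rule component_least)
    fix k :: nat
    have "inf (c *\<^sub>R x) (real k *\<^sub>R v) = c *\<^sub>R inf x ((real k / c) *\<^sub>R v)"
      using c scaleR_inf_distrib[of c x "(real k / c) *\<^sub>R v"] by simp
    then show "f (inf (c *\<^sub>R x) (real k *\<^sub>R v)) \<le> c * component f v x"
      using c component_upper[of "real k / c" x] by (simp add: blinfun.scaleR_right)
  qed
qed

lemma component_functional: "\<exists>g. dual_le 0 g \<and> (\<forall>x. 0 \<le> x \<longrightarrow> g x = component f v x)"
proof -
  have nonneg: "0 \<le> component f v x" if "0 \<le> x" for x
    using component_upper[of 0 x] that by (simp add: inf_absorb2)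
  have bnd: "component f v x \<le> norm f * norm x" if "0 \<le> x" for x
    using component_le[of x] blinfun_le_norm[of f x] by simp
  obtain g where "dual_le 0 g" "\<And>x. 0 \<le> x \<Longrightarrow> g x = component f v x"
    using positive_functional_extension[OF component_add component_scaleR bnd nonneg] by blast
  then show ?thesis by blast
qed

end

lemma sum_component_le:
  fixes z :: "nat \<Rightarrow> 'a"
  assumes pos: "\<And>n. 0 \<le> z n" and disj: "\<And>n m. n \<noteq> m \<Longrightarrow> inf (z n) (z m) = 0"
    and "finite P" and x: "0 \<le> x"
  shows "(\<Sum>n\<in>P. component f (z n) x) \<le> f x"
proof (rule LIMSEQ_le_const2)
  show "(\<lambda>k. \<Sum>n\<in>P. f (inf x (real k *\<^sub>R z n))) \<longlonglongrightarrow> (\<Sum>n\<in>P. component f (z n) x)"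
    by (intro tendsto_sum component_LIMSEQ pos)
  show "\<exists>N. \<forall>k\<ge>N. (\<Sum>n\<in>P. f (inf x (real k *\<^sub>R z n))) \<le> f x"
  proof (intro exI allI impI)
    fix k :: nat
    have "inf (inf x (real k *\<^sub>R z i)) (inf x (real k *\<^sub>R z j)) = 0" if "i \<noteq> j" for i j
    proof (rule antisym)
      have "inf (inf x (real k *\<^sub>R z i)) (inf x (real k *\<^sub>R z j)) \<le> inf (real k *\<^sub>R z i) (real k *\<^sub>R z j)"
        by (meson inf.cobounded2 inf_mono)
      also have "\<dots> = 0" using disj[OF that] scaleR_inf_distrib[of "real k" "z i" "z j"] by simp
      finally show "inf (inf x (real k *\<^sub>R z i)) (inf x (real k *\<^sub>R z j)) \<le> 0" .
      show "0 \<le> inf (inf x (real k *\<^sub>R z i)) (inf x (real k *\<^sub>R z j))"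
        using x pos by (simp add: scaleR_nonneg_nonneg)
    qed
    then have "(\<Sum>n\<in>P. inf x (real k *\<^sub>R z n)) \<le> x"
      using x pos by (intro sum_disjoint_le[OF \<open>finite P\<close>]) (simp_all add: scaleR_nonneg_nonneg)
    then show "(\<Sum>n\<in>P. f (inf x (real k *\<^sub>R z n))) \<le> f x"
      using positive_functional_mono[OF f] by (simp add: blinfun.sum_right[symmetric])
  qed
qed

end

section \<open>Order continuity of the dual norm\<close>

lemma dual_order_continuous_norm_decreasing:
  fixes G :: "nat \<Rightarrow> 'a::banach_lattice \<Rightarrow>\<^sub>L real" and E :: "'a itself"
  assumes oc: "dual_order_continuous_norm E"
    and pos: "\<And>N. dual_le 0 (G N)" and dec: "\<And>N K. N \<le> K \<Longrightarrow> dual_le (G K) (G N)"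
    and lim: "\<And>x. 0 \<le> x \<Longrightarrow> (\<lambda>N. G N x) \<longlonglongrightarrow> 0" and e: "0 < \<epsilon>"
  shows "\<exists>N. norm (G N) < \<epsilon>"
proof -
  have "\<forall>f\<in>range G. \<forall>g\<in>range G. \<exists>h\<in>range G. dual_le h f \<and> dual_le h g"
    using dec by simp (meson max.cobounded1 max.cobounded2)
  moreover have "\<forall>f\<in>range G. dual_le 0 f" using pos by blast
  moreover have "dual_le h 0" if h: "\<forall>f\<in>range G. dual_le h f" for h
    unfolding dual_le_def
  proof (intro allI impI)
    fix x :: 'a assume "0 \<le> x"
    then have "h x \<le> 0"
      using h by (intro LIMSEQ_le_const[OF lim]) (auto simp: dual_le_def)
    then show "h x \<le> blinfun_apply 0 x" by simp
  qed
  ultimately have "\<exists>g\<in>range G. norm g < \<epsilon>"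
    using oc e unfolding dual_order_continuous_norm_def by blast
  then show ?thesis by blast
qed

lemma positive_functional_suminf:
  fixes c :: "nat \<Rightarrow> 'a::banach_lattice \<Rightarrow>\<^sub>L real" and f :: "'a \<Rightarrow>\<^sub>L real"
  assumes c: "\<And>n. dual_le 0 (c n)"
    and bound: "\<And>k x. 0 \<le> x \<Longrightarrow> (\<Sum>n<k. c n x) \<le> f x"
  obtains G where "dual_le 0 G" "\<And>x. 0 \<le> x \<Longrightarrow> (\<lambda>n. c n x) sums G x"
proof -
  have c_nonneg: "0 \<le> c n x" if "0 \<le> x" for n x using c that by (simp add: dual_le_0_iff)
  have summable: "summable (\<lambda>n. c n x)" if "0 \<le> x" for x
    using c_nonneg[OF that] bound[OF that] by (rule summableI_nonneg_bounded)
  have add: "(\<Sum>n. c n (a + b)) = (\<Sum>n. c n a) + (\<Sum>n. c n b)" if "0 \<le> a" "0 \<le> b" for a b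
    unfolding blinfun.add_right using summable[OF that(1)] summable[OF that(2)] by (rule suminf_add[symmetric])
  have hom: "(\<Sum>n. c n (r *\<^sub>R a)) = r * (\<Sum>n. c n a)" if "0 \<le> r" "0 \<le> a" for r a
    unfolding blinfun.scaleR_right real_scaleR_def using summable[OF that(2)] by (rule suminf_mult)
  have bnd: "(\<Sum>n. c n x) \<le> norm f * norm x" if "0 \<le> x" for x
    using suminf_le_const[OF summable[OF that] bound[OF that]] blinfun_le_norm[of f x]
    by simp
  have nonneg: "0 \<le> (\<Sum>n. c n x)" if "0 \<le> x" for x
    using summable[OF that] c_nonneg[OF that] by (rule suminf_nonneg)
  obtain G where "dual_le 0 G" "\<And>x. 0 \<le> x \<Longrightarrow> G x = (\<Sum>n. c n x)"
    using positive_functional_extension[OF add hom bnd nonneg] by blast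
  then show ?thesis using summable by (intro that) (auto simp: summable_sums)
qed

lemma positive_functional_series_tails:
  fixes c :: "nat \<Rightarrow> 'a::banach_lattice \<Rightarrow>\<^sub>L real" and f :: "'a \<Rightarrow>\<^sub>L real"
  assumes c: "\<And>n. dual_le 0 (c n)"
    and bound: "\<And>k x. 0 \<le> x \<Longrightarrow> (\<Sum>n<k. c n x) \<le> f x"
  obtains T :: "nat \<Rightarrow> 'a \<Rightarrow>\<^sub>L real"
  where "\<And>N. dual_le 0 (T N)" "\<And>N K. N \<le> K \<Longrightarrow> dual_le (T K) (T N)"
    "\<And>x. 0 \<le> x \<Longrightarrow> (\<lambda>N. T N x) \<longlonglongrightarrow> 0" "\<And>n N x. 0 \<le> x \<Longrightarrow> N \<le> n \<Longrightarrow> c n x \<le> T N x"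
proof -
  obtain G :: "'a \<Rightarrow>\<^sub>L real" where G_sums: "\<And>x. 0 \<le> x \<Longrightarrow> (\<lambda>n. c n x) sums G x"
    using positive_functional_suminf[of c f, OF c bound] by blast
  define T where "T N = G - (\<Sum>i<N. c i)" for N
  have T_apply: "T N x = G x - (\<Sum>i<N. c i x)" for N x
    by (simp add: T_def blinfun.diff_left blinfun.sum_left)
  have T_sums: "(\<lambda>i. c (i + N) x) sums T N x" if "0 \<le> x" for N x
    using G_sums[OF that] sums_iff_shift[of "\<lambda>i. c i x" N] by (simp add: T_apply)
  have c_nonneg: "0 \<le> c n x" if "0 \<le> x" for n x using c that by (simp add: dual_le_0_iff)
  have "dual_le 0 (T N)" for N
    unfolding dual_le_0_iff by (auto intro!: sums_le[OF _ sums_zero T_sums] c_nonneg)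
  moreover have "dual_le (T K) (T N)" if "N \<le> K" for N K
    using that c_nonneg by (auto simp: dual_le_def T_apply intro!: sum_mono2)
  moreover have "(\<lambda>N. T N x) \<longlonglongrightarrow> 0" if "0 \<le> x" for x
    using tendsto_diff[OF tendsto_const G_sums[OF that, unfolded sums_def], of "G x"] by (simp add: T_apply)
  moreover have "c n x \<le> T N x" if x: "0 \<le> x" and "N \<le> n" for n N x
  proof -
    have "(\<Sum>i\<in>{n - N}. c (i + N) x) \<le> (\<Sum>i. c (i + N) x)"
      by (rule sum_le_suminf[OF sums_summable[OF T_sums[OF x]]]) (simp_all add: c_nonneg[OF x])
    then show ?thesis using \<open>N \<le> n\<close> by (simp add: sums_unique[OF T_sums[OF x], symmetric])
  qed
  ultimately show ?thesis by (rule that)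
qed

lemma positive_functional_disjoint_LIMSEQ_zero:
  fixes y :: "nat \<Rightarrow> 'a::banach_lattice" and E :: "'a itself"
  assumes oc: "dual_order_continuous_norm E" and f: "dual_le 0 f"
    and pos: "\<And>n. 0 \<le> y n" and disj: "\<And>n m. n \<noteq> m \<Longrightarrow> inf (y n) (y m) = 0"
    and bnd: "\<And>n. norm (y n) \<le> M"
  shows "(\<lambda>n. f (y n)) \<longlonglongrightarrow> 0"
proof -
  define c where "c n = (SOME g. dual_le 0 g \<and> (\<forall>x. 0 \<le> x \<longrightarrow> g x = component f (y n) x))" for n
  have "dual_le 0 (c n) \<and> (\<forall>x. 0 \<le> x \<longrightarrow> c n x = component f (y n) x)" for n
    unfolding c_def by (rule someI_ex) (rule component_functional[OF f pos])
  then have c: "\<And>n. dual_le 0 (c n)" and c_eq: "\<And>n x. 0 \<le> x \<Longrightarrow> c n x = component f (y n) x"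
    by simp_all
  have bound: "(\<Sum>n<k. c n x) \<le> f x" if "0 \<le> x" for k x
    using sum_component_le[OF f pos disj _ that, where P="{..<k}"] c_eq[OF that] by simp
  obtain T :: "nat \<Rightarrow> 'a \<Rightarrow>\<^sub>L real"
    where "\<And>N. dual_le 0 (T N)" "\<And>N K. N \<le> K \<Longrightarrow> dual_le (T K) (T N)"
      "\<And>x. 0 \<le> x \<Longrightarrow> (\<lambda>N. T N x) \<longlonglongrightarrow> 0" and c_le_T: "\<And>n N x. 0 \<le> x \<Longrightarrow> N \<le> n \<Longrightarrow> c n x \<le> T N x"
    using positive_functional_series_tails[of c f, OF c bound] by blast
  then have small: "\<exists>N. norm (T N) < \<epsilon>" if "0 < \<epsilon>" for \<epsilon>
    using dual_order_continuous_norm_decreasing[OF oc] that by blast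
  have "M \<ge> 0" using bnd[of 0] norm_ge_zero order_trans by blast
  show ?thesis
    unfolding LIMSEQ_iff
  proof (intro allI impI)
    fix r :: real assume r: "0 < r"
    obtain N where N: "norm (T N) < r / (M + 1)" using small[of "r / (M + 1)"] r \<open>M \<ge> 0\<close> by auto
    have "norm (f (y n)) < r" if "N \<le> n" for n
    proof -
      have "norm (f (y n)) = c n (y n)"
        using c_eq[OF pos] component_self[OF f pos] f pos by (simp add: dual_le_0_iff)
      also have "\<dots> \<le> norm (T N) * norm (y n)"
        using c_le_T[OF pos[of n] that] norm_blinfun[of "T N" "y n"]
        by (simp add: order_trans[OF _ abs_ge_self])
      also have "\<dots> \<le> r / (M + 1) * M"
        using N bnd[of n] \<open>M \<ge> 0\<close> r by (intro mult_mono) simp_all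
      also have "\<dots> < r" using r \<open>M \<ge> 0\<close> by (simp add: field_simps)
      finally show ?thesis .
    qed
    then show "\<exists>N. \<forall>n\<ge>N. norm (f (y n) - 0) < r" by auto
  qed
qed

section \<open>Disjointification\<close>

lemma inf_pprt_diff_scaleR_eq_0:
  fixes a b :: "'a::banach_lattice"
  assumes b: "0 \<le> b" and t: "0 \<le> t" and st: "1 \<le> s * t"
  shows "inf (pprt (a - s *\<^sub>R b)) (pprt (b - t *\<^sub>R a)) = 0"
proof -
  define u where "u = a - s *\<^sub>R b"
  define v where "v = b - t *\<^sub>R a"
  have "t *\<^sub>R u + v = (1 - s * t) *\<^sub>R b"
    by (simp add: u_def v_def algebra_simps)
  also have "\<dots> \<le> 0" using st b by (simp add: scaleR_nonpos_nonneg)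
  finally have "v \<le> t *\<^sub>R (- u)" by (simp add: add.commute le_eq_neg)
  then have "pprt v \<le> t *\<^sub>R pprt (- u)" using scaleR_pprt[OF t, of "- u"] by (metis pprt_mono)
  define k where "k = max 1 t"
  have "pprt u \<le> k *\<^sub>R pprt u"
    using scaleR_right_mono[of 1 k "pprt u"] by (simp add: k_def)
  moreover have "t *\<^sub>R pprt (- u) \<le> k *\<^sub>R pprt (- u)"
    by (rule scaleR_right_mono) (simp_all add: k_def)
  ultimately have "inf (pprt u) (pprt v) \<le> inf (k *\<^sub>R pprt u) (k *\<^sub>R pprt (- u))"
    using \<open>pprt v \<le> t *\<^sub>R pprt (- u)\<close> by (meson inf_mono order_trans)
  also have "\<dots> = 0"
    using scaleR_inf_distrib[of k "pprt u" "pprt (- u)"] by (simp add: k_def inf_pprt_pprt_uminus)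
  finally show ?thesis using antisym unfolding u_def v_def by fastforce
qed

lemma dominating_geometric_sum:
  fixes a :: "nat \<Rightarrow> 'a::banach_lattice"
  assumes pos: "\<And>n. 0 \<le> a n" and bnd: "\<And>n. norm (a n) \<le> M"
  obtains x where "0 \<le> x" "\<And>n. (1/2::real)^n *\<^sub>R a n \<le> x"
proof -
  define f where "f n = (1/2::real)^n *\<^sub>R a n" for n
  have "summable f"
  proof (rule summable_comparison_test')
    show "summable (\<lambda>n. M * (1/2::real)^n)" by simp
    show "norm (f n) \<le> M * (1/2)^n" for n
      using bnd[of n] by (simp add: f_def mult.commute mult_left_mono)
  qed
  then have sums: "(\<lambda>N. \<Sum>i<N. f i) \<longlonglongrightarrow> suminf f" by (rule summable_LIMSEQ)
  have f_nonneg: "0 \<le> f n" for n by (simp add: f_def pos scaleR_nonneg_nonneg)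
  have "f m \<le> suminf f" for m
  proof -
    have "\<forall>N\<ge>Suc m. (\<Sum>i<N. f i) - f m \<in> {v. 0 \<le> v}"
      using f_nonneg by (simp add: member_le_sum_nonneg)
    then have "suminf f - f m \<in> {v. 0 \<le> v}"
      by (intro Lim_in_closed_set[OF closed_nonneg_cone _ _ tendsto_diff[OF sums tendsto_const]])
        (auto simp: eventually_sequentially)
    then show ?thesis by simp
  qed
  moreover have "0 \<le> suminf f" using calculation[of 0] f_nonneg[of 0] by simp
  ultimately show ?thesis using that unfolding f_def by blast
qed

text \<open>The term \<open>4\<^sup>n (a\<^sub>0 + \<dots> + a\<^sub>n)\<close> makes the \<open>n\<close>-th element disjoint from all
  earlier ones, the term \<open>2\<^sup>-\<^sup>n x\<close> from all later ones.\<close>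

definition disjointified :: "(nat \<Rightarrow> 'a::banach_lattice) \<Rightarrow> 'a \<Rightarrow> nat \<Rightarrow> 'a" where
  "disjointified a x n = pprt (a (Suc n) - ((4::real)^n *\<^sub>R (\<Sum>i\<le>n. a i) + (1/2::real)^n *\<^sub>R x))"

context
  fixes a :: "nat \<Rightarrow> 'a::banach_lattice" and x :: 'a
  assumes pos: "\<And>n. 0 \<le> a n" and x: "0 \<le> x"
begin

lemma disjointified_nonneg: "0 \<le> disjointified a x n"
  by (simp add: disjointified_def)

lemma disjointified_le: "disjointified a x n \<le> a (Suc n)"
proof -
  have "0 \<le> inf (a (Suc n)) ((4::real)^n *\<^sub>R (\<Sum>i\<le>n. a i) + (1/2::real)^n *\<^sub>R x)"
    using pos x by (simp add: sum_nonneg scaleR_nonneg_nonneg)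
  then show ?thesis unfolding disjointified_def pprt_diff_eq by (simp only: diff_le_eq le_add_same_cancel1)
qed

lemma disjointified_lower_bound:
  assumes g: "dual_le 0 g"
  shows "g (a (Suc n)) - g (inf (a (Suc n)) ((4::real)^n *\<^sub>R (\<Sum>i\<le>n. a i))) - (1/2)^n * g x
    \<le> g (disjointified a x n)"
proof -
  let ?B = "(4::real)^n *\<^sub>R (\<Sum>i\<le>n. a i)" and ?C = "(1/2::real)^n *\<^sub>R x"
  have "g (inf (a (Suc n)) (?B + ?C)) \<le> g (inf (a (Suc n)) ?B + ?C)"
    using x by (intro positive_functional_mono[OF g] inf_add_nonneg_le) (simp add: scaleR_nonneg_nonneg)
  also have "\<dots> = g (inf (a (Suc n)) ?B) + (1/2)^n * g x"
    by (simp add: blinfun.add_right blinfun.scaleR_right)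
  finally show ?thesis
    unfolding disjointified_def pprt_diff_eq blinfun.diff_right by linarith
qed

lemma disjointified_disjoint:
  assumes x_ge: "\<And>n. (1/2::real)^n *\<^sub>R a n \<le> x" and "n \<noteq> m"
  shows "inf (disjointified a x n) (disjointified a x m) = 0"
proof -
  have less: "inf (disjointified a x n) (disjointified a x m) = 0" if "n < m" for n m
  proof -
    let ?B = "\<lambda>n. (4::real)^n *\<^sub>R (\<Sum>i\<le>n. a i)" and ?C = "\<lambda>n. (1/2::real)^n *\<^sub>R x"
    have "a (Suc n) \<le> (\<Sum>i\<le>m. a i)" using that pos by (intro member_le_sum_nonneg) auto
    then have "(4::real)^m *\<^sub>R a (Suc n) \<le> ?B m + ?C m"
      using x by (meson add_increasing2 scaleR_left_mono scaleR_nonneg_nonneg zero_le_power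
          zero_le_numeral zero_le_divide_iff zero_le_one)
    then have ym: "disjointified a x m \<le> pprt (a (Suc m) - (4::real)^m *\<^sub>R a (Suc n))"
      unfolding disjointified_def by (intro pprt_mono) (simp add: algebra_simps)
    have "(1/2::real)^n *\<^sub>R ((1/2::real)^(Suc m) *\<^sub>R a (Suc m)) \<le> ?C n"
      by (rule scaleR_left_mono[OF x_ge]) simp
    then have "((1/2::real)^n * (1/2)^(Suc m)) *\<^sub>R a (Suc m) \<le> ?B n + ?C n"
      using pos by (simp add: add_increasing sum_nonneg scaleR_nonneg_nonneg)
    then have yn: "disjointified a x n \<le> pprt (a (Suc n) - ((1/2::real)^n * (1/2)^(Suc m)) *\<^sub>R a (Suc m))"
      unfolding disjointified_def by (intro pprt_mono) (simp add: algebra_simps)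
    have "(2::real)^(n + Suc m) \<le> 2^(2*m)" using that by (intro power_increasing) auto
    moreover have "(4::real)^m = 2^(2*m)" by (simp add: power_mult)
    moreover have "(1/2::real)^n * (1/2)^(Suc m) = 1 / 2^(n + Suc m)"
      by (simp add: power_add power_one_over)
    ultimately have "1 \<le> (1/2::real)^n * (1/2)^(Suc m) * 4^m" by (simp add: field_simps)
    then have "inf (pprt (a (Suc n) - ((1/2::real)^n * (1/2)^(Suc m)) *\<^sub>R a (Suc m)))
                   (pprt (a (Suc m) - (4::real)^m *\<^sub>R a (Suc n))) = 0"
      using pos by (intro inf_pprt_diff_scaleR_eq_0) simp_all
    then have "inf (disjointified a x n) (disjointified a x m) \<le> 0" using inf_mono[OF yn ym] by simp
    then show ?thesis by (simp add: antisym disjointified_nonneg)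
  qed
  show ?thesis
    using \<open>n \<noteq> m\<close> less[of n m] less[of m n] by (cases "n < m") (simp_all add: inf_commute)
qed

end

lemma disjoint_sequence_below:
  fixes a :: "nat \<Rightarrow> 'a::banach_lattice"
  assumes pos: "\<And>n. 0 \<le> a n" and bnd: "\<And>n. norm (a n) \<le> M"
  obtains x y where "0 \<le> x" "\<And>n. 0 \<le> y n" "\<And>n. y n \<le> a (Suc n)"
    "\<And>n m. n \<noteq> m \<Longrightarrow> inf (y n) (y m) = 0"
    "\<And>g n. dual_le 0 g \<Longrightarrow>
       g (a (Suc n)) - g (inf (a (Suc n)) ((4::real)^n *\<^sub>R (\<Sum>i\<le>n. a i))) - (1/2)^n * g x \<le> g (y n)"
proof -
  obtain x where x: "0 \<le> x" and x_ge: "\<And>n. (1/2::real)^n *\<^sub>R a n \<le> x"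
    using dominating_geometric_sum[of a, OF pos bnd] by blast
  show ?thesis
    using disjointified_nonneg[OF pos x] disjointified_le[OF pos x]
      disjointified_disjoint[OF pos x x_ge] disjointified_lower_bound[OF pos x]
    by (rule that[OF x])
qed

lemma dependent_choice_partial_sums:
  fixes v :: "'b \<Rightarrow> 'a::ordered_comm_monoid_add"
  assumes start: "P init" and nonneg: "\<And>b. P b \<Longrightarrow> 0 \<le> v b"
    and step: "\<And>n b S. P b \<Longrightarrow> 0 \<le> S \<Longrightarrow> \<exists>b'. P b' \<and> R n b S b'"
  obtains b where "\<And>n. P (b n)" "\<And>n. R n (b n) (\<Sum>i\<le>n. v (b i)) (b (Suc n))"
proof -
  define I where "I n = (\<lambda>(b, S). P b \<and> 0 \<le> S \<and> (n = 0 \<longrightarrow> S = v b))" for n :: nat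
  define Q where "Q n = (\<lambda>(b, S) (b', S'). R n b S b' \<and> S' = S + v b')" for n :: nat
  have "\<exists>st. \<forall>n. I n (st n) \<and> Q n (st n) (st (Suc n))"
  proof (rule dependent_nat_choice)
    show "\<exists>st. I 0 st" using start nonneg[OF start] by (auto simp: I_def)
    fix st and n :: nat assume "I n st"
    then obtain b S where st: "st = (b, S)" and b: "P b" and S: "0 \<le> S"
      by (auto simp: I_def split: prod.splits)
    then obtain b' where "P b'" "R n b S b'" using step by blast
    then show "\<exists>st'. I (Suc n) st' \<and> Q n st st'"
      using S nonneg[of b'] by (intro exI[of _ "(b', S + v b')"]) (simp add: I_def Q_def st)
  qed
  then obtain st where I: "\<And>n. I n (st n)" and Q: "\<And>n. Q n (st n) (st (Suc n))" by blast
  have sums: "snd (st n) = (\<Sum>i\<le>n. v (fst (st i)))" for n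
  proof (induction n)
    case 0
    then show ?case using I[of 0] by (simp add: I_def split: prod.splits)
  next
    case (Suc n)
    then show ?case using Q[of n] by (simp add: Q_def split: prod.splits)
  qed
  have "P (fst (st n))" for n using I[of n] by (simp add: I_def split: prod.splits)
  moreover have "R n (fst (st n)) (\<Sum>i\<le>n. v (fst (st i))) (fst (st (Suc n)))" for n
    using Q[of n] sums[of n] by (simp add: Q_def split: prod.splits)
  ultimately show ?thesis by (rule that)
qed

section \<open>Bounded uaw-null sequences\<close>

lemma sequence_with_small_truncations:
  fixes x :: "nat \<Rightarrow> 'a::banach_lattice" and f :: "'a \<Rightarrow> real"
  assumes pos: "\<And>k. 0 \<le> x k" and \<delta>: "0 < \<delta>" and freq: "\<And>N. \<exists>k\<ge>N. \<delta> \<le> f (x k)"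
    and trunc: "\<And>v. 0 \<le> v \<Longrightarrow> (\<lambda>k. f (inf (x k) v)) \<longlonglongrightarrow> 0"
  obtains a where "\<And>n. a n \<in> range x" "\<And>n. \<delta> \<le> f (a n)"
    "\<And>n. f (inf (a (Suc n)) ((4::real)^n *\<^sub>R (\<Sum>i\<le>n. a i))) < \<delta>/4"
proof -
  define A where "A = {x k | k. \<delta> \<le> f (x k)}"
  have step: "\<exists>a'. a' \<in> A \<and> f (inf a' ((4::real)^n *\<^sub>R S)) < \<delta>/4" if "0 \<le> S" for n S
  proof -
    have "0 \<le> (4::real)^n *\<^sub>R S" using that by (simp add: scaleR_nonneg_nonneg)
    then obtain N where N: "\<forall>k\<ge>N. norm (f (inf (x k) ((4::real)^n *\<^sub>R S))) < \<delta>/4"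
      using trunc \<delta> unfolding LIMSEQ_iff by (metis diff_zero divide_pos_pos zero_less_numeral)
    obtain k where "k \<ge> N" "\<delta> \<le> f (x k)" using freq by blast
    then have "x k \<in> A" "f (inf (x k) ((4::real)^n *\<^sub>R S)) < \<delta>/4"
      using N abs_ge_self[of "f (inf (x k) ((4::real)^n *\<^sub>R S))"] by (auto simp: A_def)
    then show ?thesis by blast
  qed
  obtain k0 where "\<delta> \<le> f (x k0)" using freq by blast
  then have "x k0 \<in> A" by (auto simp: A_def)
  moreover have "0 \<le> a" if "a \<in> A" for a using that pos by (auto simp: A_def)
  ultimately obtain a where aA: "\<And>n. a n \<in> A"
    and "\<And>n. f (inf (a (Suc n)) ((4::real)^n *\<^sub>R (\<Sum>i\<le>n. a i))) < \<delta>/4"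
    using dependent_choice_partial_sums[where P="\<lambda>a. a \<in> A" and v="\<lambda>a. a"
        and R="\<lambda>n _ S a'. f (inf a' ((4::real)^n *\<^sub>R S)) < \<delta>/4"] step
    by metis
  moreover have "a n \<in> range x" and "\<delta> \<le> f (a n)" for n using aA[of n] by (auto simp: A_def)
  ultimately show ?thesis using that by blast
qed

lemma positive_functional_LIMSEQ_zero_if_truncations:
  fixes x :: "nat \<Rightarrow> 'a::banach_lattice" and E :: "'a itself"
  assumes oc: "dual_order_continuous_norm E" and f: "dual_le 0 f"
    and pos: "\<And>k. 0 \<le> x k" and bnd: "\<And>k. norm (x k) \<le> M"
    and trunc: "\<And>v. 0 \<le> v \<Longrightarrow> (\<lambda>k. f (inf (x k) v)) \<longlonglongrightarrow> 0"
  shows "(\<lambda>k. f (x k)) \<longlonglongrightarrow> 0"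
proof (rule ccontr)
  assume "\<not> (\<lambda>k. f (x k)) \<longlonglongrightarrow> 0"
  then obtain \<delta> where \<delta>: "0 < \<delta>" and "\<forall>N. \<exists>k\<ge>N. \<not> norm (f (x k)) < \<delta>"
    unfolding LIMSEQ_iff by auto
  moreover have "0 \<le> f (x k)" for k using f pos by (simp add: dual_le_0_iff)
  ultimately have "\<exists>k\<ge>N. \<delta> \<le> f (x k)" for N by (metis abs_of_nonneg not_less real_norm_def)
  then obtain a where a: "\<And>n. a n \<in> range x" and a_big: "\<And>n. \<delta> \<le> f (a n)"
    and small: "\<And>n. f (inf (a (Suc n)) ((4::real)^n *\<^sub>R (\<Sum>i\<le>n. a i))) < \<delta>/4"
    using sequence_with_small_truncations[of x, OF pos \<delta> _ trunc] by blast
  have a_pos: "0 \<le> a n" and a_bnd: "norm (a n) \<le> M" for n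
    using a[of n] pos bnd by auto
  obtain x0 y where y_pos: "\<And>n. 0 \<le> y n" and y_le: "\<And>n. y n \<le> a (Suc n)"
    and disj: "\<And>n m. n \<noteq> m \<Longrightarrow> inf (y n) (y m) = 0"
    and y_big: "\<And>n. f (a (Suc n)) - f (inf (a (Suc n)) ((4::real)^n *\<^sub>R (\<Sum>i\<le>n. a i)))
                    - (1/2)^n * f x0 \<le> f (y n)"
    using disjoint_sequence_below[of a M, OF a_pos a_bnd] f by metis
  have "norm (y n) \<le> M" for n
    using norm_mono_nonneg[OF y_pos y_le] a_bnd[of "Suc n"] by (meson order_trans)
  then have "(\<lambda>n. f (y n)) \<longlonglongrightarrow> 0"
    using positive_functional_disjoint_LIMSEQ_zero[OF oc f] y_pos disj by blast
  then have "(\<lambda>n. f (y n) + (1/2::real)^n * f x0) \<longlonglongrightarrow> 0 + 0"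
    by (intro tendsto_add tendsto_mult_left_zero LIMSEQ_power_zero) simp_all
  moreover have "3 * \<delta> / 4 \<le> f (y n) + (1/2::real)^n * f x0" for n
    using y_big[of n] a_big[of "Suc n"] small[of n] by simp
  ultimately have "3 * \<delta> / 4 \<le> 0" by (intro LIMSEQ_le_const) auto
  then show False using \<delta> by simp
qed

lemma weakly_null_if_uaw_null:
  fixes x :: "nat \<Rightarrow> 'a::banach_lattice" and E :: "'a itself"
  assumes oc: "dual_order_continuous_norm E"
    and bounded: "bounded (range x)" and uaw: "uaw_convergent x 0"
  shows "weakly_null x"
  unfolding weakly_null_def
proof (intro allI impI)
  fix \<phi> :: "'a \<Rightarrow> real" assume \<phi>: "bounded_linear \<phi>"
  obtain M where M: "\<And>k. norm (x k) \<le> M" using bounded unfolding bounded_iff by blast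
  have positive_null: "(\<lambda>k. P (x k)) \<longlonglongrightarrow> 0" if P: "dual_le 0 P" for P
  proof -
    have lim: "(\<lambda>k. P (labs (x k))) \<longlonglongrightarrow> 0"
    proof (rule positive_functional_LIMSEQ_zero_if_truncations[OF oc P])
      show "norm (labs (x k)) \<le> M" for k using M by simp
      fix v :: 'a assume "0 \<le> v"
      then have "weakly_null (\<lambda>k. inf (labs (x k)) v)"
        using uaw by (simp add: uaw_convergent_def)
      then show "(\<lambda>k. P (inf (labs (x k)) v)) \<longlonglongrightarrow> 0"
        unfolding weakly_null_def using blinfun.bounded_linear_right by blast
    qed simp
    have "\<forall>k. norm (P (x k)) \<le> P (labs (x k))" using positive_functional_abs_le[OF P] by simp
    then show ?thesis by (rule Lim_null_comparison[OF always_eventually lim])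
  qed
  obtain P Q where P: "dual_le 0 P" and Q: "dual_le 0 Q" and PQ: "\<And>x. \<phi> x = P x - Q x"
    using bounded_linear_eq_diff_positive_functionals[OF \<phi>] by blast
  have "(\<lambda>n. P (x n) - Q (x n)) \<longlonglongrightarrow> 0 - 0" by (intro tendsto_diff positive_null P Q)
  then show "(\<lambda>n. \<phi> (x n)) \<longlonglongrightarrow> 0" by (simp add: PQ)
qed

section \<open>Failure of order continuity\<close>

lemma positive_functional_norm_witness:
  fixes g :: "'a::banach_lattice \<Rightarrow>\<^sub>L real"
  assumes g: "dual_le 0 g" and r: "r < norm g"
  shows "\<exists>a. 0 \<le> a \<and> norm a \<le> 1 \<and> r < g a"
proof (rule ccontr)
  assume "\<not> ?thesis"
  then have H: "\<And>a. 0 \<le> a \<Longrightarrow> norm a \<le> 1 \<Longrightarrow> g a \<le> r" by (meson not_less)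
  have "0 \<le> r" using H[of 0] by simp
  have "norm g \<le> r"
  proof (rule norm_blinfun_bound[OF \<open>0 \<le> r\<close>])
    fix x :: 'a
    show "norm (g x) \<le> r * norm x"
    proof (cases "x = 0")
      case False
      then have nx: "0 < norm x" by simp
      have "g (inverse (norm x) *\<^sub>R labs x) \<le> r"
        using nx by (intro H) (simp_all add: scaleR_nonneg_nonneg)
      then have "g (labs x) \<le> r * norm x" using nx by (simp add: blinfun.scaleR_right field_simps)
      then show ?thesis using positive_functional_abs_le[OF g, of x] by simp
    qed simp
  qed
  then show False using r by simp
qed

lemma not_dual_order_continuous_sequences:
  fixes E :: "'a::banach_lattice itself"
  assumes "\<not> dual_order_continuous_norm E"
  obtains \<epsilon> :: real and G :: "nat \<Rightarrow> 'a \<Rightarrow>\<^sub>L real" and a :: "nat \<Rightarrow> 'a"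
  where "0 < \<epsilon>" "\<And>n. dual_le 0 (G n)" "\<And>n. dual_le (G (Suc n)) (G n)"
    "\<And>n. 0 \<le> a n" "\<And>n. norm (a n) \<le> 1" "\<And>n. \<epsilon> < G n (a n)"
    "\<And>n. G (Suc n) ((4::real)^n *\<^sub>R (\<Sum>i\<le>n. a i)) < \<epsilon>/4"
proof -
  obtain D :: "('a \<Rightarrow>\<^sub>L real) set" and \<epsilon> where ne: "D \<noteq> {}"
    and dir: "\<forall>f\<in>D. \<forall>g\<in>D. \<exists>h\<in>D. dual_le h f \<and> dual_le h g"
    and pos: "\<forall>f\<in>D. dual_le 0 f" and Inf0: "\<forall>h. (\<forall>f\<in>D. dual_le h f) \<longrightarrow> dual_le h 0"
    and \<epsilon>: "0 < \<epsilon>" and big: "\<And>g. g \<in> D \<Longrightarrow> \<epsilon> \<le> norm g"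
    using assms unfolding dual_order_continuous_norm_def by (metis not_less)
  have witness: "\<exists>a. 0 \<le> a \<and> norm a \<le> 1 \<and> \<epsilon>/2 < g a" if "g \<in> D" for g
    using pos big[OF that] \<epsilon> that by (intro positive_functional_norm_witness) auto
  define P :: "('a \<Rightarrow>\<^sub>L real) \<times> 'a \<Rightarrow> bool"
    where "P = (\<lambda>(g, a). g \<in> D \<and> 0 \<le> a \<and> norm a \<le> 1 \<and> \<epsilon>/2 < blinfun_apply g a)"
  define R :: "nat \<Rightarrow> ('a \<Rightarrow>\<^sub>L real) \<times> 'a \<Rightarrow> 'a \<Rightarrow> ('a \<Rightarrow>\<^sub>L real) \<times> 'a \<Rightarrow> bool"
    where "R = (\<lambda>n (g, _) S (g', _). dual_le g' g \<and> blinfun_apply g' ((4::real)^n *\<^sub>R S) < \<epsilon>/8)"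
  obtain g0 where "g0 \<in> D" using ne by blast
  then obtain a0 where "P (g0, a0)" using witness by (auto simp: P_def)
  moreover have "0 \<le> snd p" if "P p" for p using that by (auto simp: P_def)
  moreover have "\<exists>p'. P p' \<and> R n p S p'" if "P p" "0 \<le> S" for n p S
  proof -
    obtain g a where p: "p = (g, a)" and g: "g \<in> D" using \<open>P p\<close> by (auto simp: P_def)
    have "0 \<le> (4::real)^n *\<^sub>R S" using \<open>0 \<le> S\<close> by (simp add: scaleR_nonneg_nonneg)
    then obtain g' where "g' \<in> D" "dual_le g' g" "g' ((4::real)^n *\<^sub>R S) < \<epsilon>/8"
      using directed_to_zero_pointwise[OF ne dir pos Inf0 _ _ g, of _ "\<epsilon>/8"] \<epsilon> by auto
    moreover obtain a' where "0 \<le> a'" "norm a' \<le> 1" "\<epsilon>/2 < g' a'" using witness[OF \<open>g' \<in> D\<close>] by blast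
    ultimately show ?thesis by (intro exI[of _ "(g', a')"]) (simp add: P_def R_def p)
  qed
  ultimately obtain p where P: "\<And>n. P (p n)" and R: "\<And>n. R n (p n) (\<Sum>i\<le>n. snd (p i)) (p (Suc n))"
    using dependent_choice_partial_sums[where P=P and v=snd and R=R] by metis
  have "fst (p n) \<in> D \<and> 0 \<le> snd (p n) \<and> norm (snd (p n)) \<le> 1 \<and> \<epsilon>/2 < fst (p n) (snd (p n))" for n
    using P[of n] by (cases "p n") (simp add: P_def)
  moreover have "dual_le (fst (p (Suc n))) (fst (p n))
      \<and> fst (p (Suc n)) ((4::real)^n *\<^sub>R (\<Sum>i\<le>n. snd (p i))) < \<epsilon>/8" for n
    using R[of n] by (cases "p n", cases "p (Suc n)") (simp add: R_def)
  ultimately show ?thesis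
    using pos \<epsilon> by (intro that[of "\<epsilon>/2" "\<lambda>n. fst (p n)" "\<lambda>n. snd (p n)"]) auto
qed

lemma disjoint_sequence_if_not_dual_order_continuous:
  fixes E :: "'a::banach_lattice itself"
  assumes "\<not> dual_order_continuous_norm E"
  obtains f :: "'a \<Rightarrow>\<^sub>L real" and \<delta> :: real and y :: "nat \<Rightarrow> 'a"
  where "dual_le 0 f" "0 < \<delta>" "\<And>n. 0 \<le> y n" "\<And>n. norm (y n) \<le> 1" "\<And>n. \<delta> \<le> f (y n)"
    "\<And>n m. n \<noteq> m \<Longrightarrow> inf (y n) (y m) = 0"
proof -
  obtain \<epsilon> and G :: "nat \<Rightarrow> 'a \<Rightarrow>\<^sub>L real" and a where \<epsilon>: "0 < \<epsilon>" and G_pos: "\<And>n. dual_le 0 (G n)"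
    and G_dec: "\<And>n. dual_le (G (Suc n)) (G n)"
    and a_pos: "\<And>n. 0 \<le> a n" and a_norm: "\<And>n. norm (a n) \<le> 1" and a_big: "\<And>n. \<epsilon> < G n (a n)"
    and G_small: "\<And>n. G (Suc n) ((4::real)^n *\<^sub>R (\<Sum>i\<le>n. a i)) < \<epsilon>/4"
    by (fact not_dual_order_continuous_sequences[OF assms])
  have G_le: "dual_le (G n) (G 0)" for n
  proof (induction n)
    case (Suc n)
    then show ?case using dual_le_trans[OF G_dec] by blast
  qed (simp add: dual_le_def)
  obtain x y where x: "0 \<le> x" and y_pos: "\<And>n. 0 \<le> y n" and y_le: "\<And>n. y n \<le> a (Suc n)"
    and disj: "\<And>n m. n \<noteq> m \<Longrightarrow> inf (y n) (y m) = 0"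
    and y_big: "\<And>g n. dual_le 0 g \<Longrightarrow>
       g (a (Suc n)) - g (inf (a (Suc n)) ((4::real)^n *\<^sub>R (\<Sum>i\<le>n. a i))) - (1/2)^n * g x \<le> g (y n)"
    using disjoint_sequence_below[of a 1, OF a_pos a_norm] by metis
  define f where "f = G 0"
  have "(\<lambda>n. (1/2::real)^n * f x) \<longlonglongrightarrow> 0"
    by (intro tendsto_mult_left_zero LIMSEQ_power_zero) simp
  then obtain N where N: "\<And>n. N \<le> n \<Longrightarrow> (1/2::real)^n * f x < \<epsilon>/4"
    using \<epsilon> unfolding LIMSEQ_iff by (metis abs_less_iff diff_zero real_norm_def zero_less_divide_iff zero_less_numeral)
  have "\<epsilon>/2 \<le> f (y n)" if "N \<le> n" for n
  proof -
    let ?g = "G (Suc n)" and ?S = "(4::real)^n *\<^sub>R (\<Sum>i\<le>n. a i)"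
    have "?g (inf (a (Suc n)) ?S) \<le> ?g ?S" by (rule positive_functional_mono[OF G_pos]) simp
    moreover have "(1/2::real)^n * ?g x \<le> (1/2)^n * f x"
      using G_le[of "Suc n"] x by (simp add: f_def dual_le_def)
    moreover have "?g (y n) \<le> f (y n)" using G_le[of "Suc n"] y_pos by (simp add: f_def dual_le_def)
    ultimately show ?thesis
      using y_big[OF G_pos, of "Suc n" n] a_big[of "Suc n"] G_small[of n] N[OF that] by linarith
  qed
  moreover have "norm (y n) \<le> 1" for n
    using norm_mono_nonneg[OF y_pos y_le] a_norm[of "Suc n"] by (meson order_trans)
  ultimately show ?thesis
    using G_pos \<epsilon> y_pos disj by (intro that[of f "\<epsilon>/2" "\<lambda>n. y (n + N)"]) (simp_all add: f_def)
qed

section \<open>Norming functionals\<close>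

text \<open>A linear functional on a subspace, dominated by the norm and norming \<open>z\<close>, is encoded by its
  graph; by Zorn's lemma there is a maximal one, and maximal ones are total (Hahn--Banach).\<close>

definition dominated_graph :: "'a::real_normed_vector \<Rightarrow> ('a \<times> real) set \<Rightarrow> bool" where
  "dominated_graph z M \<longleftrightarrow>
     (\<forall>x r s. (x, r) \<in> M \<longrightarrow> (x, s) \<in> M \<longrightarrow> r = s)
     \<and> (\<forall>x r y s. (x, r) \<in> M \<longrightarrow> (y, s) \<in> M \<longrightarrow> (x + y, r + s) \<in> M)
     \<and> (\<forall>c x r. (x, r) \<in> M \<longrightarrow> (c *\<^sub>R x, c * r) \<in> M)
     \<and> (\<forall>x r. (x, r) \<in> M \<longrightarrow> r \<le> norm x)
     \<and> (z, norm z) \<in> M"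

lemma dominated_graph_Union:
  assumes C: "C \<in> chains {M. dominated_graph z M}" and ne: "C \<noteq> {}"
  shows "dominated_graph z (\<Union>C)"
proof -
  have two: "\<exists>M\<in>C. p \<in> M \<and> q \<in> M" if "p \<in> \<Union>C" "q \<in> \<Union>C" for p q
    using that chainsD[OF C] by blast
  have good: "dominated_graph z M" if "M \<in> C" for M using chainsD2[OF C] that by blast
  show ?thesis
    unfolding dominated_graph_def
  proof (intro conjI allI impI)
    fix x r s assume "(x, r) \<in> \<Union>C" "(x, s) \<in> \<Union>C"
    then obtain M where "M \<in> C" "(x, r) \<in> M" "(x, s) \<in> M" using two by blast
    then show "r = s" using good unfolding dominated_graph_def by blast
  next
    fix x r y s assume "(x, r) \<in> \<Union>C" "(y, s) \<in> \<Union>C"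
    then obtain M where "M \<in> C" "(x, r) \<in> M" "(y, s) \<in> M" using two by blast
    then show "(x + y, r + s) \<in> \<Union>C" using good unfolding dominated_graph_def by blast
  next
    fix c x r assume "(x, r) \<in> \<Union>C"
    then obtain M where "M \<in> C" "(x, r) \<in> M" by blast
    then show "(c *\<^sub>R x, c * r) \<in> \<Union>C" using good unfolding dominated_graph_def by blast
  next
    fix x r assume "(x, r) \<in> \<Union>C"
    then obtain M where "M \<in> C" "(x, r) \<in> M" by blast
    then show "r \<le> norm x" using good unfolding dominated_graph_def by blast
  next
    obtain M where "M \<in> C" using ne by blast
    then show "(z, norm z) \<in> \<Union>C" using good unfolding dominated_graph_def by blast
  qed
qed

lemma dominated_graph_line:
  assumes "z \<noteq> 0"
  shows "dominated_graph z {(c *\<^sub>R z, c * norm z) | c. True}"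
  unfolding dominated_graph_def
proof (intro conjI allI impI)
  fix x r s assume "(x, r) \<in> {(c *\<^sub>R z, c * norm z) | c. True}" "(x, s) \<in> {(c *\<^sub>R z, c * norm z) | c. True}"
  then show "r = s" using assms by (auto simp: scaleR_cancel_right)
next
  fix x r y s assume "(x, r) \<in> {(c *\<^sub>R z, c * norm z) | c. True}" "(y, s) \<in> {(c *\<^sub>R z, c * norm z) | c. True}"
  then obtain c d where "x = c *\<^sub>R z" "r = c * norm z" "y = d *\<^sub>R z" "s = d * norm z" by blast
  then show "(x + y, r + s) \<in> {(c *\<^sub>R z, c * norm z) | c. True}"
    by (intro CollectI exI[of _ "c + d"]) (simp add: algebra_simps)
next
  fix e x r assume "(x, r) \<in> {(c *\<^sub>R z, c * norm z) | c. True}"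
  then obtain c where "x = c *\<^sub>R z" "r = c * norm z" by blast
  then show "(e *\<^sub>R x, e * r) \<in> {(c *\<^sub>R z, c * norm z) | c. True}"
    by (intro CollectI exI[of _ "e * c"]) simp
next
  fix x r assume "(x, r) \<in> {(c *\<^sub>R z, c * norm z) | c. True}"
  then show "r \<le> norm x" by (auto simp: mult_right_mono)
next
  show "(z, norm z) \<in> {(c *\<^sub>R z, c * norm z) | c. True}" by (intro CollectI exI[of _ 1]) simp
qed

lemma one_step_extension_bound:
  fixes M :: "('a::real_normed_vector \<times> real) set"
  assumes scale: "\<And>c x r. (x, r) \<in> M \<Longrightarrow> (c *\<^sub>R x, c * r) \<in> M"
    and bound: "\<And>x r. (x, r) \<in> M \<Longrightarrow> r \<le> norm x"
    and lower: "\<And>x r. (x, r) \<in> M \<Longrightarrow> r - norm (x - w) \<le> m"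
    and upper: "\<And>x r. (x, r) \<in> M \<Longrightarrow> m \<le> norm (x + w) - r"
    and xr: "(x, r) \<in> M"
  shows "r + c * m \<le> norm (x + c *\<^sub>R w)"
proof (cases c "0::real" rule: linorder_cases)
  case less
  have "inverse (- c) * r - norm (inverse (- c) *\<^sub>R x - w) \<le> m"
    by (rule lower[OF scale[OF xr]])
  then have "(- c) * (inverse (- c) * r - norm (inverse (- c) *\<^sub>R x - w)) \<le> (- c) * m"
    using less by (simp add: mult_left_mono)
  moreover have "(- c) * norm (inverse (- c) *\<^sub>R x - w) = norm (x + c *\<^sub>R w)"
  proof -
    have "x + c *\<^sub>R w = (- c) *\<^sub>R (inverse (- c) *\<^sub>R x - w)" using less by (simp add: algebra_simps)
    then show ?thesis using less by simp
  qed
  ultimately have "r - norm (x + c *\<^sub>R w) \<le> (- c) * m" using less by (simp add: algebra_simps)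
  then show ?thesis by simp
next
  case equal
  then show ?thesis using bound[OF xr] by simp
next
  case greater
  have "m \<le> norm (inverse c *\<^sub>R x + w) - inverse c * r"
    by (rule upper[OF scale[OF xr]])
  from mult_left_mono[OF this, of c] have "c * m \<le> c * norm (inverse c *\<^sub>R x + w) - r"
    using greater by (simp add: right_diff_distrib mult.assoc[symmetric])
  moreover have "c * norm (inverse c *\<^sub>R x + w) = norm (x + c *\<^sub>R w)"
  proof -
    have "x + c *\<^sub>R w = c *\<^sub>R (inverse c *\<^sub>R x + w)" using greater by (simp add: algebra_simps)
    then show ?thesis using greater by simp
  qed
  ultimately show ?thesis by linarith
qed

lemma one_step_extension_value:
  fixes M :: "('a::real_normed_vector \<times> real) set"
  assumes add: "\<And>x r y s. (x, r) \<in> M \<Longrightarrow> (y, s) \<in> M \<Longrightarrow> (x + y, r + s) \<in> M"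
    and bound: "\<And>x r. (x, r) \<in> M \<Longrightarrow> r \<le> norm x" and zero: "(0, 0) \<in> M"
  obtains m where "\<And>x r. (x, r) \<in> M \<Longrightarrow> r - norm (x - w) \<le> m"
    "\<And>x r. (x, r) \<in> M \<Longrightarrow> m \<le> norm (x + w) - r"
proof
  have key: "r - norm (x - w) \<le> norm (y + w) - s" if "(x, r) \<in> M" "(y, s) \<in> M" for x r y s
  proof -
    have "r + s \<le> norm ((x - w) + (y + w))" using bound[OF add[OF that]] by simp
    also have "\<dots> \<le> norm (x - w) + norm (y + w)" by (rule norm_triangle_ineq)
    finally show ?thesis by simp
  qed
  define T where "T = (\<lambda>(x, r). r - norm (x - w)) ` M"
  have "bdd_above T" unfolding T_def using key[OF _ zero] by (intro bdd_aboveI2[where M="norm w"]) force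
  then show "r - norm (x - w) \<le> Sup T" if "(x, r) \<in> M" for x r
    using that by (intro cSup_upper) (force simp: T_def)
  have "T \<noteq> {}" using zero by (auto simp: T_def)
  then show "Sup T \<le> norm (y + w) - s" if "(y, s) \<in> M" for y s
    using key that by (intro cSup_least) (auto simp: T_def)
qed

lemma dominated_graphD:
  assumes "dominated_graph z M"
  shows "\<And>x r s. (x, r) \<in> M \<Longrightarrow> (x, s) \<in> M \<Longrightarrow> r = s"
    and "\<And>x r y s. (x, r) \<in> M \<Longrightarrow> (y, s) \<in> M \<Longrightarrow> (x + y, r + s) \<in> M"
    and "\<And>c x r. (x, r) \<in> M \<Longrightarrow> (c *\<^sub>R x, c * r) \<in> M"
    and "\<And>x r. (x, r) \<in> M \<Longrightarrow> r \<le> norm x"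
    and "(z, norm z) \<in> M"
  using assms unfolding dominated_graph_def by blast+

definition graph_extension :: "('a::real_vector \<times> real) set \<Rightarrow> 'a \<Rightarrow> real \<Rightarrow> ('a \<times> real) set" where
  "graph_extension M w m = {(x + c *\<^sub>R w, r + c * m) | x r c. (x, r) \<in> M}"

lemma graph_extensionI: "(x, r) \<in> M \<Longrightarrow> (x + c *\<^sub>R w, r + c * m) \<in> graph_extension M w m"
  unfolding graph_extension_def by blast

lemma dominated_graph_extension:
  assumes M: "dominated_graph z M" and w: "\<forall>r. (w, r) \<notin> M"
    and lower: "\<And>x r. (x, r) \<in> M \<Longrightarrow> r - norm (x - w) \<le> m"
    and upper: "\<And>x r. (x, r) \<in> M \<Longrightarrow> m \<le> norm (x + w) - r"
  shows "dominated_graph z (graph_extension M w m)"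
  unfolding dominated_graph_def
proof (intro conjI allI impI)
  note Mfun = dominated_graphD(1)[OF M] and Madd = dominated_graphD(2)[OF M]
    and Mscale = dominated_graphD(3)[OF M] and Mbound = dominated_graphD(4)[OF M]
  fix x r s assume "(x, r) \<in> graph_extension M w m" "(x, s) \<in> graph_extension M w m"
  then obtain x1 r1 c1 x2 r2 c2 where 1: "x = x1 + c1 *\<^sub>R w" "r = r1 + c1 * m" "(x1, r1) \<in> M"
    and 2: "x = x2 + c2 *\<^sub>R w" "s = r2 + c2 * m" "(x2, r2) \<in> M"
    unfolding graph_extension_def by blast
  have "c1 = c2"
  proof (rule ccontr)
    assume "c1 \<noteq> c2"
    have "x2 - x1 = (c1 - c2) *\<^sub>R w" using 1(1) 2(1) by (simp add: algebra_simps)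
    then have "w = inverse (c1 - c2) *\<^sub>R (x2 + (-1) *\<^sub>R x1)" using \<open>c1 \<noteq> c2\<close> by simp
    then show False using w Mscale[OF Madd[OF 2(3) Mscale[OF 1(3)]]] by metis
  qed
  then show "r = s" using 1 2 Mfun by simp
next
  fix x r y s assume "(x, r) \<in> graph_extension M w m" "(y, s) \<in> graph_extension M w m"
  then obtain x1 r1 c1 x2 r2 c2 where "x = x1 + c1 *\<^sub>R w" "r = r1 + c1 * m" "(x1, r1) \<in> M"
    and "y = x2 + c2 *\<^sub>R w" "s = r2 + c2 * m" "(x2, r2) \<in> M"
    unfolding graph_extension_def by blast
  then show "(x + y, r + s) \<in> graph_extension M w m"
    using graph_extensionI[OF dominated_graphD(2)[OF M], of x1 r1 x2 r2 "c1 + c2" w m]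
    by (simp add: algebra_simps)
next
  fix e x r assume "(x, r) \<in> graph_extension M w m"
  then obtain x1 r1 c where "x = x1 + c *\<^sub>R w" "r = r1 + c * m" "(x1, r1) \<in> M"
    unfolding graph_extension_def by blast
  then show "(e *\<^sub>R x, e * r) \<in> graph_extension M w m"
    using graph_extensionI[OF dominated_graphD(3)[OF M], of x1 r1 e "e * c" w m]
    by (simp add: algebra_simps)
next
  fix x r assume "(x, r) \<in> graph_extension M w m"
  then show "r \<le> norm x"
    unfolding graph_extension_def
    using one_step_extension_bound[OF dominated_graphD(3,4)[OF M] lower upper] by blast
next
  show "(z, norm z) \<in> graph_extension M w m"
    using graph_extensionI[OF dominated_graphD(5)[OF M], of 0] by simp
qed

lemma dominated_graph_extend:
  assumes M: "dominated_graph z M" and w: "\<forall>r. (w, r) \<notin> M"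
  shows "\<exists>M'. dominated_graph z M' \<and> M \<subset> M'"
proof -
  have "(0, 0) \<in> M" using dominated_graphD(3)[OF M dominated_graphD(5)[OF M], of 0] by simp
  then obtain m where lower: "\<And>x r. (x, r) \<in> M \<Longrightarrow> r - norm (x - w) \<le> m"
    and upper: "\<And>x r. (x, r) \<in> M \<Longrightarrow> m \<le> norm (x + w) - r"
    using one_step_extension_value[of M w, OF dominated_graphD(2,4)[OF M]] by blast
  have "M \<subseteq> graph_extension M w m" using graph_extensionI[of _ _ M 0] by auto
  moreover have "(w, m) \<in> graph_extension M w m"
    using graph_extensionI[OF \<open>(0, 0) \<in> M\<close>, of 1] by simp
  ultimately show ?thesis using dominated_graph_extension[OF M w lower upper] w by blast
qed

lemma exists_bounded_linear_functional_norm: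
  fixes z :: "'a::real_normed_vector"
  assumes "z \<noteq> 0"
  shows "\<exists>\<phi>::'a \<Rightarrow> real. bounded_linear \<phi> \<and> \<phi> z = norm z"
proof -
  have "\<exists>M\<in>{M. dominated_graph z M}. \<forall>M'\<in>{M. dominated_graph z M}. M \<subseteq> M' \<longrightarrow> M' = M"
  proof (rule Zorn_Lemma2, intro ballI)
    fix C assume C: "C \<in> chains {M. dominated_graph z M}"
    show "\<exists>U\<in>{M. dominated_graph z M}. \<forall>M\<in>C. M \<subseteq> U"
    proof (cases "C = {}")
      case True then show ?thesis using dominated_graph_line[OF assms] by blast
    next
      case False then show ?thesis using dominated_graph_Union[OF C False] by blast
    qed
  qed
  then obtain M where M: "dominated_graph z M"
    and maximal: "\<And>M'. dominated_graph z M' \<Longrightarrow> M \<subseteq> M' \<Longrightarrow> M' = M" by blast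
  note Mfun = dominated_graphD(1)[OF M] and Madd = dominated_graphD(2)[OF M]
    and Mscale = dominated_graphD(3)[OF M] and Mbound = dominated_graphD(4)[OF M]
    and Mz = dominated_graphD(5)[OF M]
  have "\<exists>r. (w, r) \<in> M" for w
    using dominated_graph_extend[OF M] maximal by blast
  then obtain \<phi> where \<phi>: "\<And>w. (w, \<phi> w) \<in> M" by metis
  have \<phi>_eq: "(w, r) \<in> M \<Longrightarrow> \<phi> w = r" for w r using Mfun \<phi> by blast
  have "\<phi> (x + y) = \<phi> x + \<phi> y" for x y by (rule \<phi>_eq[OF Madd[OF \<phi> \<phi>]])
  moreover have "\<phi> (c *\<^sub>R x) = c *\<^sub>R \<phi> x" for c x using \<phi>_eq[OF Mscale[OF \<phi>]] by simp
  moreover have "norm (\<phi> x) \<le> norm x * 1" for x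
    using Mbound[OF \<phi>, of x] Mbound[OF \<phi>, of "- x"] \<phi>_eq[OF Mscale[OF \<phi>, of "-1" x]] by simp
  ultimately have "bounded_linear \<phi>" by (rule bounded_linear_intro)
  then show ?thesis using \<phi>_eq[OF Mz] by blast
qed

section \<open>Operators\<close>

lemma weakly_null_norm_limit_eq_0:
  fixes T :: "'a::real_normed_vector \<Rightarrow> 'b::real_normed_vector"
  assumes "weakly_null x" "bounded_linear T" "strict_mono r" "(\<lambda>n. T (x (r n))) \<longlonglongrightarrow> l"
  shows "l = 0"
proof (rule ccontr)
  assume "l \<noteq> 0"
  then obtain \<phi> :: "'b \<Rightarrow> real" where \<phi>: "bounded_linear \<phi>" and "\<phi> l = norm l"
    using exists_bounded_linear_functional_norm by blast
  have "(\<lambda>n. \<phi> (T (x n))) \<longlonglongrightarrow> 0"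
    using assms(1) bounded_linear_compose[OF \<phi> assms(2)] unfolding weakly_null_def by blast
  then have "(\<lambda>n. \<phi> (T (x (r n)))) \<longlonglongrightarrow> 0"
    using LIMSEQ_subseq_LIMSEQ[OF _ assms(3)] by (simp add: o_def)
  moreover have "(\<lambda>n. \<phi> (T (x (r n)))) \<longlonglongrightarrow> \<phi> l" by (rule bounded_linear.tendsto[OF \<phi> assms(4)])
  ultimately have "\<phi> l = 0" using LIMSEQ_unique by blast
  then show False using \<open>\<phi> l = norm l\<close> \<open>l \<noteq> 0\<close> by simp
qed

lemma compact_op_weakly_null_LIMSEQ_zero:
  fixes T :: "'a::real_normed_vector \<Rightarrow> 'b::real_normed_vector"
  assumes T: "compact_op T" and bnd: "\<And>n. norm (x n) \<le> M" and wn: "weakly_null x"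
  shows "(\<lambda>n. norm (T (x n))) \<longlonglongrightarrow> 0"
proof (rule ccontr)
  assume "\<not> ?thesis"
  then obtain \<epsilon> where \<epsilon>: "0 < \<epsilon>" and "\<forall>N. \<exists>n\<ge>N. \<epsilon> \<le> norm (T (x n))"
    unfolding LIMSEQ_iff by (auto simp: not_less)
  then have S: "infinite {n. \<epsilon> \<le> norm (T (x n))}" by (simp add: infinite_nat_iff_unbounded_le)
  define r where "r = enumerate {n. \<epsilon> \<le> norm (T (x n))}"
  have r: "strict_mono r" unfolding r_def by (rule strict_mono_enumerate[OF S])
  have big: "\<epsilon> \<le> norm (T (x (r n)))" for n using enumerate_in_set[OF S] by (simp add: r_def)
  have lin: "bounded_linear T" and K: "compact (closure (T ` ball 0 1))"
    using T by (simp_all add: compact_op_def)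
  have "M \<ge> 0" using bnd[of 0] norm_ge_zero order_trans by blast
  define u where "u n = T (x (r n) /\<^sub>R (M + 1))" for n
  have "u n \<in> closure (T ` ball 0 1)" for n
    unfolding u_def using bnd[of "r n"] \<open>M \<ge> 0\<close>
    by (intro closure_subset[THEN subsetD] imageI) (simp add: field_simps)
  then obtain l r' where r': "strict_mono r'" and lim: "(u \<circ> r') \<longlonglongrightarrow> l"
    using seq_compactE[OF compact_imp_seq_compact[OF K], of u] by blast
  have "u n = T (x (r n)) /\<^sub>R (M + 1)" for n by (simp add: u_def linear_scale[OF bounded_linear.linear[OF lin]])
  then have "(\<lambda>n. T (x ((r \<circ> r') n))) \<longlonglongrightarrow> (M + 1) *\<^sub>R l"
    using tendsto_scaleR[OF tendsto_const lim, of "M + 1"] \<open>M \<ge> 0\<close> by (simp add: o_def)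
  moreover from this have "(M + 1) *\<^sub>R l = 0"
    by (rule weakly_null_norm_limit_eq_0[OF wn lin strict_mono_o[OF r r']])
  ultimately have "(\<lambda>n. norm (T (x (r (r' n))))) \<longlonglongrightarrow> 0"
    using tendsto_norm by fastforce
  moreover have "\<epsilon> \<le> norm (T (x (r (r' n))))" for n by (rule big)
  ultimately have "\<epsilon> \<le> 0" by (intro LIMSEQ_le_const) auto
  then show False using \<epsilon> by simp
qed

lemma rank_one_operator:
  fixes f :: "'a::banach_lattice \<Rightarrow>\<^sub>L real" and e :: 'a
  assumes f: "dual_le 0 f" and e: "0 \<le> e"
  shows "positive_op (\<lambda>x. f x *\<^sub>R e)" "compact_op (\<lambda>x. f x *\<^sub>R e)" "dunford_pettis_op (\<lambda>x. f x *\<^sub>R e)"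
proof -
  let ?T = "\<lambda>x. f x *\<^sub>R e"
  show "positive_op ?T" using f e by (simp add: positive_op_def dual_le_0_iff scaleR_nonneg_nonneg)
  have lin: "bounded_linear ?T"
    by (rule bounded_linear_compose[OF bounded_linear_scaleR_left blinfun.bounded_linear_right])
  have "?T ` ball 0 1 \<subseteq> (\<lambda>t. t *\<^sub>R e) ` {- norm f..norm f}"
  proof
    fix v assume "v \<in> ?T ` ball 0 1"
    then obtain x where x: "norm x < 1" "v = ?T x" by auto
    have "\<bar>f x\<bar> \<le> norm f" using norm_blinfun[of f x] x(1) by (simp add: order_trans mult_left_le)
    then show "v \<in> (\<lambda>t. t *\<^sub>R e) ` {- norm f..norm f}" using x(2) by (auto simp: abs_le_iff)
  qed
  moreover have "compact ((\<lambda>t. t *\<^sub>R e) ` {- norm f..norm f})"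
    by (intro compact_continuous_image continuous_intros) simp
  ultimately have "closure (?T ` ball 0 1) \<subseteq> (\<lambda>t. t *\<^sub>R e) ` {- norm f..norm f}"
    and "compact ((\<lambda>t. t *\<^sub>R e) ` {- norm f..norm f})"
    by (simp_all add: closure_minimal compact_imp_closed)
  then have "compact (closure (?T ` ball 0 1))"
    using compact_Int_closed[OF _ closed_closure] by (metis inf.absorb_iff2)
  then show "compact_op ?T" using lin by (simp add: compact_op_def)
  have "(\<lambda>n. norm (?T (x n))) \<longlonglongrightarrow> 0" if "weakly_null x" for x
  proof -
    have "(\<lambda>n. f (x n)) \<longlonglongrightarrow> 0" using that blinfun.bounded_linear_right unfolding weakly_null_def by blast
    then show ?thesis using tendsto_mult_left_zero[OF tendsto_rabs_zero, of _ _ "norm e"] by simp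
  qed
  then show "dunford_pettis_op ?T" using lin by (simp add: dunford_pettis_op_def)
qed

lemma uaw_dunford_pettis_if_dunford_pettis:
  fixes T :: "'a::banach_lattice \<Rightarrow> 'b::real_normed_vector" and E :: "'a itself"
  assumes "dual_order_continuous_norm E" and "dunford_pettis_op T"
  shows "uaw_dunford_pettis_op T"
  using assms weakly_null_if_uaw_null unfolding uaw_dunford_pettis_op_def dunford_pettis_op_def by blast

lemma uaw_dunford_pettis_if_compact:
  fixes T :: "'a::banach_lattice \<Rightarrow> 'b::real_normed_vector" and E :: "'a itself"
  assumes oc: "dual_order_continuous_norm E" and T: "compact_op T"
  shows "uaw_dunford_pettis_op T"
  unfolding uaw_dunford_pettis_op_def
proof (intro conjI allI impI)
  show "bounded_linear T" using T by (simp add: compact_op_def)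
  fix x :: "nat \<Rightarrow> 'a" assume "bounded (range x)" "uaw_convergent x 0"
  moreover from this obtain M where "\<And>n. norm (x n) \<le> M" unfolding bounded_iff by blast
  ultimately show "(\<lambda>n. norm (T (x n))) \<longlonglongrightarrow> 0"
    using compact_op_weakly_null_LIMSEQ_zero[OF T] weakly_null_if_uaw_null[OF oc] by blast
qed

lemma rank_one_counterexample:
  fixes E :: "'a::banach_lattice itself"
  assumes "\<not> dual_order_continuous_norm E"
  obtains T :: "'a \<Rightarrow> 'a"
  where "positive_op T" "compact_op T" "dunford_pettis_op T" "\<not> uaw_dunford_pettis_op T"
proof -
  obtain f :: "'a \<Rightarrow>\<^sub>L real" and \<delta> and y :: "nat \<Rightarrow> 'a" where f: "dual_le 0 f" and \<delta>: "0 < \<delta>"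
    and y_pos: "\<And>n. 0 \<le> y n" and y_norm: "\<And>n. norm (y n) \<le> 1" and y_big: "\<And>n. \<delta> \<le> f (y n)"
    and disj: "\<And>n m. n \<noteq> m \<Longrightarrow> inf (y n) (y m) = 0"
    by (fact disjoint_sequence_if_not_dual_order_continuous[OF assms])
  define T where "T x = f x *\<^sub>R y 0" for x
  have "\<not> uaw_dunford_pettis_op T"
  proof
    assume "uaw_dunford_pettis_op T"
    moreover have "bounded (range y)" unfolding bounded_iff using y_norm by blast
    moreover have "uaw_convergent y 0" using y_pos disj by (rule disjoint_uaw_null)
    ultimately have "(\<lambda>n. norm (T (y n))) \<longlonglongrightarrow> 0" unfolding uaw_dunford_pettis_op_def by blast
    moreover have "\<delta> * norm (y 0) \<le> norm (T (y n))" for n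
      using y_big[of n] \<delta> by (simp add: T_def mult_right_mono)
    ultimately have "\<delta> * norm (y 0) \<le> 0" by (intro LIMSEQ_le_const) auto
    moreover have "y 0 \<noteq> 0" using y_big[of 0] \<delta> by auto
    ultimately show False using \<delta> by (simp add: mult_le_0_iff)
  qed
  then show ?thesis using rank_one_operator[OF f y_pos[of 0]] that unfolding T_def by blast
qed

theorem corollary3p2:
  fixes E :: "'a::banach_lattice itself"
  shows "((\<forall>T :: 'a \<Rightarrow> 'a. positive_op T \<and> dunford_pettis_op T \<longrightarrow> uaw_dunford_pettis_op T)
           \<longleftrightarrow> (\<forall>T :: 'a \<Rightarrow> 'a. positive_op T \<and> compact_op T \<longrightarrow> uaw_dunford_pettis_op T))
       \<and> ((\<forall>T :: 'a \<Rightarrow> 'a. positive_op T \<and> compact_op T \<longrightarrow> uaw_dunford_pettis_op T)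
           \<longleftrightarrow> dual_order_continuous_norm E)"
proof (cases "dual_order_continuous_norm E")
  case True
  then show ?thesis
    using uaw_dunford_pettis_if_dunford_pettis uaw_dunford_pettis_if_compact by blast
next
  case False
  then obtain T :: "'a \<Rightarrow> 'a" where "positive_op T" "compact_op T" "dunford_pettis_op T"
    "\<not> uaw_dunford_pettis_op T"
    by (rule rank_one_counterexample)
  then show ?thesis using False by blast
qed

end
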